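(* The operator $T_0:\mathcal{H}^{real}\to\mathcal{H}^{real}$ is compact.
   Context: Let $\phi_0(x)=\sqrt{2}\,\tanh(x)/\sqrt{3-\tanh^2(x)}$ and $\eta_0=1-\phi_0^4$. Let $\mathcal{H}^{real}$ be the space of continuous functions $f:\mathbb{R}\to\mathbb{R}$ with $f'\in L^2(\mathbb{R})$ and $\eta_0^{1/2}f\in L^2(\mathbb{R})$. Equip it with the inner product $$\langle f,g\rangle_0=\int_{\mathbb{R}}\big(f'g'+\eta_0fg\big)\,dx,$$ which makes $\mathcal{H}^{real}$ a Hilbert space. $T_0$ is the bounded self-adjoint operator on $\mathcal{H}^{real}$ defined (via the Riesz representation theorem) by $$\langle T_0f,g\rangle_0=\int_{\mathbb{R}}\eta_0fg\,dx\qquad\text{for all }g\in\mathcal{H}^{real}.$$ *)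

theory Defs
  imports "HOL-Analysis.Analysis"
begin

definition phi0 :: "real \<Rightarrow> real" where
  "phi0 x = sqrt 2 * tanh x / sqrt (3 - (tanh x)^2)"

definition eta0 :: "real \<Rightarrow> real" where
  "eta0 x = 1 - (phi0 x)^4"

text \<open>d is a (weak) derivative of f in L2: d is square integrable and f is the
  indefinite integral of d (so f is locally absolutely continuous with f' = d a.e.).\<close>
definition is_L2_deriv :: "(real \<Rightarrow> real) \<Rightarrow> (real \<Rightarrow> real) \<Rightarrow> bool" where
  "is_L2_deriv f d \<longleftrightarrow> d \<in> borel_measurable lborel \<and>
     integrable lborel (\<lambda>x. (d x)^2) \<and>
     (\<forall>a b. a \<le> b \<longrightarrow> set_integrable lborel {a..b} d \<and>
        f b - f a = (LINT x:{a..b}|lborel. d x))"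

definition Hreal :: "(real \<Rightarrow> real) set" where
  "Hreal = {f. continuous_on UNIV f \<and> (\<exists>d. is_L2_deriv f d) \<and>
               integrable lborel (\<lambda>x. eta0 x * (f x)^2)}"

definition wderiv :: "(real \<Rightarrow> real) \<Rightarrow> real \<Rightarrow> real" where
  "wderiv f = (SOME d. is_L2_deriv f d)"

definition ip0 :: "(real \<Rightarrow> real) \<Rightarrow> (real \<Rightarrow> real) \<Rightarrow> real" where
  "ip0 f g = (\<integral>x. wderiv f x * wderiv g x \<partial>lborel) + (\<integral>x. eta0 x * f x * g x \<partial>lborel)"

definition norm0 :: "(real \<Rightarrow> real) \<Rightarrow> real" where
  "norm0 f = sqrt (ip0 f f)"

definition T0 :: "(real \<Rightarrow> real) \<Rightarrow> (real \<Rightarrow> real)" where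
  "T0 f = (THE u. u \<in> Hreal \<and> (\<forall>g\<in>Hreal. ip0 u g = (\<integral>x. eta0 x * f x * g x \<partial>lborel)))"

end

theory Submission
  imports Defs "HOL-Library.Diagonal_Subsequence"
begin

text \<open>
  The form \<open>ip0\<close> is an inner product for which Hreal is complete: along a Cauchy sequence
  the derivatives converge in \<open>L\<^sup>2\<close> (Riesz-Fischer), and the values converge pointwise
  because of the bound \<open>f(x)\<^sup>2 \<le> K (1 + \<bar>x\<bar>) \<parallel>f\<parallel>\<^sup>2\<close>, which follows from the
  Holder estimate \<open>(f y - f x)\<^sup>2 \<le> \<bar>y - x\<bar> \<integral>f'\<^sup>2\<close> and \<open>eta0 > 0\<close> near \<open>0\<close>.
  Hence \<open>T0 F\<close> exists for every \<open>F\<close> in \<open>L\<^sup>2(eta0)\<close>, as the minimizer of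
  \<open>\<parallel>u\<parallel>\<^sup>2 - 2 \<integral>eta0 F u\<close>, and \<open>T0\<close> is 1-Lipschitz from \<open>L\<^sup>2(eta0)\<close> to Hreal.
  Compactness of \<open>T0\<close> thus reduces to compactness of the embedding of Hreal into
  \<open>L\<^sup>2(eta0)\<close>: a bounded sequence is pointwise bounded by \<open>C (1 + \<bar>x\<bar>)\<^sup>1\<^sup>/\<^sup>2\<close> and uniformly
  1/2-Holder, so a diagonal subsequence converges on the rationals and then everywhere; since
  \<open>eta0\<close> decays like \<open>exp (-2\<bar>x\<bar>)\<close>, dominated convergence gives convergence in \<open>L\<^sup>2(eta0)\<close>.
\<close>

section \<open>The weight eta0\<close>

lemma tanh_square_less_1: "(tanh (x::real))^2 < 1"
  using tanh_real_bounds[of x] by (simp add: abs_square_less_1 abs_less_iff)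

lemma phi0_square: "(phi0 x)^2 = 2 * (tanh x)^2 / (3 - (tanh x)^2)"
  using tanh_square_less_1[of x] unfolding phi0_def
  by (simp add: power_divide power_mult_distrib)

lemma phi0_square_less_1: "(phi0 x)^2 < 1"
  using tanh_square_less_1[of x] unfolding phi0_square by (simp add: divide_less_eq)

lemma one_minus_phi0_square_le: "1 - (phi0 x)^2 \<le> 3/2 * (1 - (tanh x)^2)"
proof -
  let ?t = "(tanh x)^2"
  have t: "0 \<le> ?t" "?t < 1" using tanh_square_less_1[of x] by auto
  have "1 - (phi0 x)^2 = 3 * (1 - ?t) / (3 - ?t)"
    unfolding phi0_square using t by (simp add: field_simps)
  also have "\<dots> \<le> 3 * (1 - ?t) / 2" using t by (intro divide_left_mono) auto
  finally show ?thesis by simp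
qed

lemma eta0_pos: "0 < eta0 x"
proof -
  have "(phi0 x)^4 = ((phi0 x)^2)^2" by simp
  also have "\<dots> < 1"
    using phi0_square_less_1[of x] by (metis abs_of_nonneg abs_square_less_1 zero_le_power2)
  finally show ?thesis unfolding eta0_def by simp
qed

lemma eta0_nonneg: "0 \<le> eta0 x"
  using eta0_pos[of x] by simp

lemma continuous_on_eta0: "continuous_on UNIV eta0"
proof -
  have "sqrt (3 - (tanh x)^2) \<noteq> 0" for x :: real
    using tanh_square_less_1[of x] by simp
  then show ?thesis unfolding eta0_def phi0_def by (intro continuous_intros) auto
qed

lemma borel_measurable_eta0[measurable]: "eta0 \<in> borel_measurable borel"
  using continuous_on_eta0 by (rule borel_measurable_continuous_onI)

lemma eta0_ge_on_compact:
  assumes "compact K"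
  obtains c where "0 < c" "\<And>y. y \<in> K \<Longrightarrow> c \<le> eta0 y"
proof (cases "K = {}")
  case True
  then show ?thesis using that[of 1] by simp
next
  case False
  then obtain y0 where "y0 \<in> K" "\<forall>y\<in>K. eta0 y0 \<le> eta0 y"
    using continuous_attains_inf[OF assms] continuous_on_subset[OF continuous_on_eta0] by blast
  then show ?thesis using that[of "eta0 y0"] eta0_pos[of y0] by auto
qed

lemma one_minus_tanh_square_le: "1 - (tanh (x::real))^2 \<le> 4 * exp (-2 * \<bar>x\<bar>)"
proof -
  define e where "e = exp (-2 * \<bar>x\<bar>)"
  have e: "0 < e" unfolding e_def by simp
  have "(tanh x)^2 = ((1 - e) / (1 + e))^2"
    unfolding e_def by (metis tanh_real_abs tanh_real_altdef power2_abs)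
  also have "\<dots> = (1 - e)^2 / (1 + e)^2" by (simp add: power_divide)
  finally have "1 - (tanh x)^2 = ((1 + e)^2 - (1 - e)^2) / (1 + e)^2"
    using e by (simp add: diff_divide_distrib)
  also have "\<dots> = 4 * e / (1 + e)^2" by (simp add: power2_eq_square algebra_simps)
  also have "\<dots> \<le> 4 * e / 1"
    using e by (intro divide_left_mono) (auto simp: power2_eq_square intro!: mult_ge1_I)
  finally show ?thesis unfolding e_def by simp
qed

lemma eta0_times_linear_le: "eta0 x * (1 + \<bar>x\<bar>) \<le> 12 * exp (- \<bar>x\<bar>)"
proof -
  have "eta0 x = (1 - (phi0 x)^2) * (1 + (phi0 x)^2)"
    unfolding eta0_def by (simp add: algebra_simps power2_eq_square power4_eq_xxxx)
  also have "\<dots> \<le> (1 - (phi0 x)^2) * 2"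
    using phi0_square_less_1[of x] by (intro mult_left_mono) auto
  also have "\<dots> \<le> 12 * exp (-2 * \<bar>x\<bar>)"
    using one_minus_phi0_square_le[of x] one_minus_tanh_square_le[of x] by simp
  finally have "eta0 x * (1 + \<bar>x\<bar>) \<le> 12 * exp (-2 * \<bar>x\<bar>) * exp \<bar>x\<bar>"
    using eta0_nonneg[of x] exp_ge_add_one_self[of "\<bar>x\<bar>"] by (intro mult_mono) auto
  also have "\<dots> = 12 * exp (- \<bar>x\<bar>)" by (simp add: exp_add[symmetric])
  finally show ?thesis .
qed

lemma integrable_exp_neg_abs: "integrable lborel (\<lambda>x::real. exp (- \<bar>x\<bar>))"
proof -
  have "(\<lambda>x::real. exp (- 1 * x)) integrable_on {0..}"
    by (rule integrable_on_exp_minus_to_infinity) simp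
  then have "(\<lambda>x::real. exp (- x)) absolutely_integrable_on {0..}"
    by (intro nonnegative_absolutely_integrable_1) auto
  then have pos: "integrable lborel (\<lambda>x::real. indicator {0..} x *\<^sub>R exp (- x))"
    unfolding set_integrable_def by (subst (asm) integrable_completion) auto
  then have neg: "integrable lborel (\<lambda>x::real. indicator {0..} (- x) *\<^sub>R exp x)"
    using lborel_integrable_real_affine_iff[of "-1" "\<lambda>x. indicator {0..} x *\<^sub>R exp (- x)" 0]
    by simp
  have "integrable lborel (\<lambda>x::real. indicator {0..} x *\<^sub>R exp (- x) + indicator {0..} (- x) *\<^sub>R exp x)"
    using pos neg by (rule Bochner_Integration.integrable_add)
  then show ?thesis
    by (rule Bochner_Integration.integrable_bound) (auto simp: indicator_def)
qed

lemma integrable_eta0_times_linear: "integrable lborel (\<lambda>x. eta0 x * (1 + \<bar>x\<bar>))"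
  using integrable_mult_right[OF integrable_exp_neg_abs, of 12]
  by (rule Bochner_Integration.integrable_bound)
    (use eta0_times_linear_le eta0_nonneg in \<open>auto intro!: mult_nonneg_nonneg\<close>)

section \<open>Square-integrable real functions\<close>

lemma nonneg_quadratic_imp_discriminant_le:
  fixes A B C :: real
  assumes nonneg: "\<And>t. 0 \<le> A + 2 * t * C + t^2 * B"
  shows "C^2 \<le> A * B"
proof (cases "B > 0")
  case True
  have "0 \<le> A + 2 * (- C / B) * C + (- C / B)^2 * B" by (rule nonneg)
  also have "\<dots> = A - C^2 / B" using True by (simp add: power2_eq_square field_simps)
  finally show ?thesis using True by (simp add: divide_le_eq mult.commute)
next
  case False
  have "C = 0"
  proof (rule ccontr)
    assume "C \<noteq> 0"
    define t where "t = - (\<bar>A\<bar> + 1) / (2 * C)"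
    have "2 * t * C = - (\<bar>A\<bar> + 1)" unfolding t_def using \<open>C \<noteq> 0\<close> by simp
    moreover have "t^2 * B \<le> 0" using False by (simp add: mult_nonneg_nonpos)
    ultimately show False using nonneg[of t] by linarith
  qed
  moreover have "B = 0"
  proof (rule ccontr)
    assume "B \<noteq> 0"
    with False have "B < 0" by simp
    then have "(sqrt ((\<bar>A\<bar> + 1) / - B))^2 * B = - (\<bar>A\<bar> + 1)"
      by (simp add: field_simps)
    with nonneg[of "sqrt ((\<bar>A\<bar> + 1) / - B)"] \<open>C = 0\<close> show False by simp
  qed
  ultimately show ?thesis by simp
qed

lemma integrable_mult_if_square_integrable:
  fixes f g :: "'a \<Rightarrow> real"
  assumes [measurable]: "f \<in> borel_measurable M" "g \<in> borel_measurable M"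
    and "integrable M (\<lambda>x. (f x)^2)" "integrable M (\<lambda>x. (g x)^2)"
  shows "integrable M (\<lambda>x. f x * g x)"
proof (rule Bochner_Integration.integrable_bound)
  show "integrable M (\<lambda>x. (f x)^2 + (g x)^2)" using assms by auto
  show "AE x in M. norm (f x * g x) \<le> norm ((f x)^2 + (g x)^2)"
  proof (intro AE_I2)
    fix x
    have "2 * (\<bar>f x\<bar> * \<bar>g x\<bar>) \<le> (f x)^2 + (g x)^2"
      using sum_squares_bound[of "\<bar>f x\<bar>" "\<bar>g x\<bar>"] by (simp add: mult.assoc)
    moreover have "0 \<le> \<bar>f x\<bar> * \<bar>g x\<bar>" by simp
    ultimately have "\<bar>f x\<bar> * \<bar>g x\<bar> \<le> (f x)^2 + (g x)^2" by linarith
    then show "norm (f x * g x) \<le> norm ((f x)^2 + (g x)^2)" by (simp add: abs_mult)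
  qed
qed auto

lemma square_integrable_lincomb:
  fixes f g :: "'a \<Rightarrow> real"
  assumes [measurable]: "f \<in> borel_measurable M" "g \<in> borel_measurable M"
    and f2: "integrable M (\<lambda>x. (f x)^2)" and g2: "integrable M (\<lambda>x. (g x)^2)"
  shows "integrable M (\<lambda>x. (a * f x + b * g x)^2)"
proof -
  have "integrable M (\<lambda>x. a^2 * (f x)^2 + 2 * a * b * (f x * g x) + b^2 * (g x)^2)"
    using f2 g2 integrable_mult_if_square_integrable[OF assms] by auto
  moreover have "(\<lambda>x. (a * f x + b * g x)^2)
      = (\<lambda>x. a^2 * (f x)^2 + 2 * a * b * (f x * g x) + b^2 * (g x)^2)"
    by (simp add: fun_eq_iff power2_eq_square algebra_simps)
  ultimately show ?thesis by simp
qed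

lemma square_integrable_diff:
  fixes f g :: "'a \<Rightarrow> real"
  assumes "f \<in> borel_measurable M" "g \<in> borel_measurable M"
    and "integrable M (\<lambda>x. (f x)^2)" "integrable M (\<lambda>x. (g x)^2)"
  shows "integrable M (\<lambda>x. (f x - g x)^2)"
  using square_integrable_lincomb[OF assms, of 1 "-1"] by simp

lemma integral_Cauchy_Schwarz:
  fixes f g :: "'a \<Rightarrow> real"
  assumes [measurable]: "f \<in> borel_measurable M" "g \<in> borel_measurable M"
    and f2: "integrable M (\<lambda>x. (f x)^2)" and g2: "integrable M (\<lambda>x. (g x)^2)"
  shows "(\<integral>x. f x * g x \<partial>M)^2 \<le> (\<integral>x. (f x)^2 \<partial>M) * (\<integral>x. (g x)^2 \<partial>M)"
proof (rule nonneg_quadratic_imp_discriminant_le)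
  fix t :: real
  have fg: "integrable M (\<lambda>x. f x * g x)"
    by (rule integrable_mult_if_square_integrable) (use assms in auto)
  have "0 \<le> (\<integral>x. (f x + t * g x)^2 \<partial>M)" by simp
  also have "\<dots> = (\<integral>x. (f x)^2 + 2 * t * (f x * g x) + t^2 * (g x)^2 \<partial>M)"
    by (simp add: power2_eq_square algebra_simps)
  also have "\<dots> = (\<integral>x. (f x)^2 \<partial>M) + 2 * t * (\<integral>x. f x * g x \<partial>M) + t^2 * (\<integral>x. (g x)^2 \<partial>M)"
    using f2 g2 fg by simp
  finally show "0 \<le> (\<integral>x. (f x)^2 \<partial>M) + 2 * t * (\<integral>x. f x * g x \<partial>M) + t^2 * (\<integral>x. (g x)^2 \<partial>M)" .
qed

lemma sqrt_weight_mult: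
  fixes w :: real
  assumes "0 \<le> w"
  shows "(sqrt w * y)^2 = w * y^2" "(sqrt w * y) * (sqrt w * z) = w * y * z"
    "(sqrt w * y - sqrt w * z)^2 = w * (y - z)^2"
proof -
  show "(sqrt w * y)^2 = w * y^2" for y using assms by (simp add: power_mult_distrib)
  then show "(sqrt w * y - sqrt w * z)^2 = w * (y - z)^2" by (simp flip: right_diff_distrib)
  have "sqrt w * sqrt w = w" using assms by simp
  then show "(sqrt w * y) * (sqrt w * z) = w * y * z" by (metis mult.assoc mult.left_commute)
qed

lemma integrable_weighted_mult:
  fixes f g w :: "'a \<Rightarrow> real"
  assumes [measurable]: "f \<in> borel_measurable M" "g \<in> borel_measurable M" "w \<in> borel_measurable M"
    and w: "\<And>x. 0 \<le> w x"
    and "integrable M (\<lambda>x. w x * (f x)^2)" "integrable M (\<lambda>x. w x * (g x)^2)"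
  shows "integrable M (\<lambda>x. w x * f x * g x)"
  using integrable_mult_if_square_integrable[of "\<lambda>x. sqrt (w x) * f x" M "\<lambda>x. sqrt (w x) * g x"]
    assms by (simp add: sqrt_weight_mult[OF w])

lemma weighted_square_integrable_lincomb:
  fixes f g w :: "'a \<Rightarrow> real"
  assumes [measurable]: "f \<in> borel_measurable M" "g \<in> borel_measurable M" "w \<in> borel_measurable M"
    and w: "\<And>x. 0 \<le> w x"
    and "integrable M (\<lambda>x. w x * (f x)^2)" "integrable M (\<lambda>x. w x * (g x)^2)"
  shows "integrable M (\<lambda>x. w x * (a * f x + b * g x)^2)"
proof -
  have "(a * (sqrt (w x) * f x) + b * (sqrt (w x) * g x))^2 = w x * (a * f x + b * g x)^2" for x
    using sqrt_weight_mult(1)[OF w, of x "a * f x + b * g x"] by (simp add: algebra_simps)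
  then show ?thesis
    using square_integrable_lincomb[of "\<lambda>x. sqrt (w x) * f x" M "\<lambda>x. sqrt (w x) * g x" a b]
      assms by (simp add: sqrt_weight_mult[OF w])
qed

lemma weighted_integral_Cauchy_Schwarz:
  fixes f g w :: "'a \<Rightarrow> real"
  assumes [measurable]: "f \<in> borel_measurable M" "g \<in> borel_measurable M" "w \<in> borel_measurable M"
    and w: "\<And>x. 0 \<le> w x"
    and "integrable M (\<lambda>x. w x * (f x)^2)" "integrable M (\<lambda>x. w x * (g x)^2)"
  shows "(\<integral>x. w x * f x * g x \<partial>M)^2 \<le> (\<integral>x. w x * (f x)^2 \<partial>M) * (\<integral>x. w x * (g x)^2 \<partial>M)"
  using integral_Cauchy_Schwarz[of "\<lambda>x. sqrt (w x) * f x" M "\<lambda>x. sqrt (w x) * g x"]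
    assms by (simp add: sqrt_weight_mult[OF w])

lemma Fatou_integrable_le:
  fixes g :: "nat \<Rightarrow> 'a \<Rightarrow> real"
  assumes [measurable]: "\<And>n. g n \<in> borel_measurable M" "G \<in> borel_measurable M"
    and nonneg: "\<And>n x. 0 \<le> g n x"
    and lim: "AE x in M. (\<lambda>n. g n x) \<longlonglongrightarrow> G x"
    and int: "\<And>n. integrable M (g n)"
    and bound: "eventually (\<lambda>n. (\<integral>x. g n x \<partial>M) \<le> C) sequentially"
  shows "integrable M G" "(\<integral>x. G x \<partial>M) \<le> C"
proof -
  have G_nonneg: "AE x in M. 0 \<le> G x"
    using lim by eventually_elim (rule LIMSEQ_le_const, auto simp: nonneg)
  obtain N where "\<And>n. n \<ge> N \<Longrightarrow> (\<integral>x. g n x \<partial>M) \<le> C"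
    using bound unfolding eventually_sequentially by blast
  moreover have "0 \<le> (\<integral>x. g N x \<partial>M)" using nonneg by simp
  ultimately have "0 \<le> C" by force
  have "(\<integral>\<^sup>+ x. ennreal (G x) \<partial>M) = (\<integral>\<^sup>+ x. liminf (\<lambda>n. ennreal (g n x)) \<partial>M)"
    using lim by (intro nn_integral_cong_AE) (auto elim!: eventually_mono
        intro!: lim_imp_Liminf[symmetric] tendsto_ennrealI)
  also have "\<dots> \<le> liminf (\<lambda>n. \<integral>\<^sup>+ x. ennreal (g n x) \<partial>M)"
    by (intro nn_integral_liminf) auto
  also have "\<dots> \<le> ennreal C"
  proof (rule Liminf_le)
    show "\<forall>\<^sub>F n in sequentially. (\<integral>\<^sup>+ x. ennreal (g n x) \<partial>M) \<le> ennreal C"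
      using bound
    proof eventually_elim
      case (elim n)
      then show ?case
        using nn_integral_eq_integral[OF int[of n]] nonneg by (simp add: ennreal_leI)
    qed
  qed simp
  finally have le: "(\<integral>\<^sup>+ x. ennreal (G x) \<partial>M) \<le> ennreal C" .
  then show "integrable M G"
    by (intro integrableI_nonneg G_nonneg) (auto simp: le_less_trans[OF le])
  have "(\<integral>x. G x \<partial>M) = enn2real (\<integral>\<^sup>+ x. ennreal (G x) \<partial>M)"
    by (rule integral_eq_nn_integral) (auto simp: G_nonneg)
  also have "\<dots> \<le> C"
    using enn2real_mono[OF le] \<open>0 \<le> C\<close> by simp
  finally show "(\<integral>x. G x \<partial>M) \<le> C" .
qed

lemma L2_Cauchy_tendsto_AE_limit:
  fixes D :: "nat \<Rightarrow> 'a \<Rightarrow> real"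
  assumes [measurable]: "\<And>n. D n \<in> borel_measurable M" "G \<in> borel_measurable M"
    and sq: "\<And>n. integrable M (\<lambda>x. (D n x)^2)"
    and cauchy: "\<And>e. e > 0 \<Longrightarrow> \<exists>N. \<forall>m\<ge>N. \<forall>n\<ge>N. (\<integral>x. (D m x - D n x)^2 \<partial>M) < e"
    and r: "strict_mono r" and lim: "AE x in M. (\<lambda>k. D (r k) x) \<longlonglongrightarrow> G x"
  shows "integrable M (\<lambda>x. (G x)^2)" "(\<lambda>n. \<integral>x. (D n x - G x)^2 \<partial>M) \<longlonglongrightarrow> 0"
proof -
  have close: "integrable M (\<lambda>x. (D n x - G x)^2) \<and> (\<integral>x. (D n x - G x)^2 \<partial>M) \<le> e"
    if N: "\<forall>m\<ge>N. \<forall>n\<ge>N. (\<integral>x. (D m x - D n x)^2 \<partial>M) < e" and "N \<le> n" for e N n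
  proof -
    have "AE x in M. (\<lambda>k. (D n x - D (r k) x)^2) \<longlonglongrightarrow> (D n x - G x)^2"
      using lim by eventually_elim (intro tendsto_intros)
    moreover have "eventually (\<lambda>k. (\<integral>x. (D n x - D (r k) x)^2 \<partial>M) \<le> e) sequentially"
      unfolding eventually_sequentially
      using N \<open>N \<le> n\<close> seq_suble[OF r] by (meson le_trans less_imp_le)
    moreover have "integrable M (\<lambda>x. (D n x - D (r k) x)^2)" for k
      by (intro square_integrable_diff sq) auto
    ultimately show ?thesis
      using Fatou_integrable_le[where g="\<lambda>k x. (D n x - D (r k) x)^2" and M=M
          and G="\<lambda>x. (D n x - G x)^2" and C=e]
      by auto
  qed
  obtain N1 where "\<forall>m\<ge>N1. \<forall>n\<ge>N1. (\<integral>x. (D m x - D n x)^2 \<partial>M) < 1"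
    using cauchy[of 1] by auto
  then have "integrable M (\<lambda>x. (D N1 x - G x)^2)" using close by blast
  then show "integrable M (\<lambda>x. (G x)^2)"
    using square_integrable_diff[of "D N1" M "\<lambda>x. D N1 x - G x"] sq by simp
  show "(\<lambda>n. \<integral>x. (D n x - G x)^2 \<partial>M) \<longlonglongrightarrow> 0"
  proof (rule LIMSEQ_I)
    fix e :: real assume "0 < e"
    then obtain N where "\<forall>m\<ge>N. \<forall>n\<ge>N. (\<integral>x. (D m x - D n x)^2 \<partial>M) < e / 2"
      using cauchy[of "e / 2"] by auto
    then have "\<bar>\<integral>x. (D n x - G x)^2 \<partial>M\<bar> < e" if "N \<le> n" for n
      using close[of N "e / 2" n] that \<open>0 < e\<close> by simp
    then show "\<exists>N. \<forall>n\<ge>N. norm ((\<integral>x. (D n x - G x)^2 \<partial>M) - 0) < e" by auto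
  qed
qed

lemma abs_le_geometric_square: "\<bar>a::real\<bar> \<le> 2^k * a^2 + (1/2)^k"
proof (cases "\<bar>a\<bar> \<le> (1/2)^k")
  case False
  then have "1 \<le> 2^k * \<bar>a\<bar>" by (simp add: power_one_over field_simps)
  then have "\<bar>a\<bar> \<le> (2^k * \<bar>a\<bar>) * \<bar>a\<bar>" by (metis abs_ge_zero mult_1 mult_right_mono)
  then have "\<bar>a\<bar> \<le> 2^k * a^2" by (simp add: power2_eq_square mult.assoc)
  moreover have "0 \<le> (1/2::real)^k" by simp
  ultimately show ?thesis by linarith
qed (simp add: add_increasing)

lemma convergent_if_summable_abs_diff:
  fixes u :: "nat \<Rightarrow> real"
  assumes "summable (\<lambda>k. \<bar>u (Suc k) - u k\<bar>)"
  shows "convergent u"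
proof -
  have "summable (\<lambda>k. u (Suc k) - u k)" using assms by (rule summable_rabs_cancel)
  then have "convergent (\<lambda>k. u 0 + (\<Sum>i<k. u (Suc i) - u i))"
    by (simp add: summable_iff_convergent convergent_add_const_iff)
  then show ?thesis by (simp add: sum_lessThan_telescope)
qed

lemma Cauchy_imp_fast_subseq:
  fixes X :: "nat \<Rightarrow> nat \<Rightarrow> real"
  assumes cauchy: "\<And>e. e > 0 \<Longrightarrow> \<exists>N. \<forall>m\<ge>N. \<forall>n\<ge>N. X m n < e"
  obtains r where "strict_mono r" "\<And>k. X (r (Suc k)) (r k) < (1/4)^k"
proof -
  have "\<forall>k. \<exists>N. \<forall>m\<ge>N. \<forall>n\<ge>N. X m n < (1/4::real)^k"
    using cauchy by simp
  then obtain \<phi> where \<phi>: "\<And>k m n. \<phi> k \<le> m \<Longrightarrow> \<phi> k \<le> n \<Longrightarrow> X m n < (1/4)^k"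
    by metis
  define r where "r k = (\<Sum>i\<le>k. \<phi> i) + k" for k
  have r: "strict_mono r" unfolding strict_mono_Suc_iff r_def by simp
  have \<phi>_le_r: "\<phi> k \<le> r k" for k
    unfolding r_def using member_le_sum[of k "{..k}" \<phi>] by simp
  have "X (r (Suc k)) (r k) < (1/4)^k" for k
    using \<phi>_le_r[of k] \<phi>_le_r[of "Suc k"] strict_monoD[OF r, of k "Suc k"] by (intro \<phi>) auto
  with r that show ?thesis by blast
qed

text \<open>Since \<open>\<bar>a\<bar> \<le> 2\<^sup>k a\<^sup>2 + 2\<^sup>-\<^sup>k\<close>, the sequence \<open>D k x\<close> converges wherever
  \<open>\<Sum>k. 2\<^sup>k (D (k+1) x - D k x)\<^sup>2\<close> is finite; this sum has integral at most 2.\<close>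

lemma AE_convergent_if_L2_steps_le:
  fixes D :: "nat \<Rightarrow> 'a \<Rightarrow> real"
  assumes [measurable]: "\<And>n. D n \<in> borel_measurable M"
    and steps: "\<And>k. integrable M (\<lambda>x. (D (Suc k) x - D k x)^2)"
    and small: "\<And>k. (\<integral>x. (D (Suc k) x - D k x)^2 \<partial>M) \<le> (1/4)^k"
  shows "AE x in M. convergent (\<lambda>k. D k x)"
proof -
  define a where "a k x = D (Suc k) x - D k x" for k x
  have [measurable]: "a k \<in> borel_measurable M" for k unfolding a_def by measurable
  have "(\<integral>x. 2^k * (a k x)^2 \<partial>M) \<le> (1/2)^k" for k
    using mult_left_mono[OF small[of k], of "2^k"] unfolding a_def
    by (simp add: power_divide[symmetric] power_mult_distrib[symmetric])
  then have "(\<integral>\<^sup>+x. ennreal (2^k * (a k x)^2) \<partial>M) \<le> ennreal ((1/2)^k)" for k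
    using nn_integral_eq_integral[of M "\<lambda>x. 2^k * (a k x)^2"] steps
    by (simp add: a_def ennreal_leI)
  then have "(\<integral>\<^sup>+x. (\<Sum>k. ennreal (2^k * (a k x)^2)) \<partial>M) \<le> (\<Sum>k. ennreal ((1/2)^k))"
    by (subst nn_integral_suminf) (auto intro: suminf_le)
  also have "\<dots> = ennreal 2"
    by (subst suminf_ennreal2) (auto simp: suminf_geometric[of "1/2::real"] summable_geometric)
  finally have "AE x in M. (\<Sum>k. ennreal (2^k * (a k x)^2)) \<noteq> \<infinity>"
    by (intro nn_integral_PInf_AE) (auto simp: top_unique)
  then show ?thesis
  proof eventually_elim
    case (elim x)
    then have "summable (\<lambda>k. 2^k * (a k x)^2)"
      by (intro summable_suminf_not_top) auto
    then have "summable (\<lambda>k. 2^k * (a k x)^2 + (1/2)^k)"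
      by (intro summable_add) (auto simp: summable_geometric)
    then have "summable (\<lambda>k. \<bar>a k x\<bar>)"
      by (rule summable_comparison_test'[where N=0]) (simp add: abs_le_geometric_square)
    then show ?case unfolding a_def by (rule convergent_if_summable_abs_diff)
  qed
qed

lemma L2_complete:
  fixes D :: "nat \<Rightarrow> 'a \<Rightarrow> real"
  assumes [measurable]: "\<And>n. D n \<in> borel_measurable M"
    and sq: "\<And>n. integrable M (\<lambda>x. (D n x)^2)"
    and cauchy: "\<And>e. e > 0 \<Longrightarrow> \<exists>N. \<forall>m\<ge>N. \<forall>n\<ge>N. (\<integral>x. (D m x - D n x)^2 \<partial>M) < e"
  obtains d where "d \<in> borel_measurable M" "integrable M (\<lambda>x. (d x)^2)"
    "(\<lambda>n. \<integral>x. (D n x - d x)^2 \<partial>M) \<longlonglongrightarrow> 0"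
proof -
  obtain r where r: "strict_mono r"
    and small: "\<And>k. (\<integral>x. (D (r (Suc k)) x - D (r k) x)^2 \<partial>M) < (1/4)^k"
    using Cauchy_imp_fast_subseq[OF cauchy] by blast
  have conv: "AE x in M. convergent (\<lambda>k. D (r k) x)"
    using small by (intro AE_convergent_if_L2_steps_le) (auto intro: square_integrable_diff sq less_imp_le)
  define d where "d x = lim (\<lambda>k. D (r k) x)" for x
  have dm[measurable]: "d \<in> borel_measurable M" unfolding d_def by measurable
  have "AE x in M. (\<lambda>k. D (r k) x) \<longlonglongrightarrow> d x"
    using conv by eventually_elim (simp add: d_def convergent_LIMSEQ_iff)
  from L2_Cauchy_tendsto_AE_limit[OF assms(1) dm sq cauchy r this] show ?thesis
    by (intro that dm) simp_all
qed

section \<open>Square-integrable weak derivatives\<close>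

lemma is_L2_derivD:
  assumes "is_L2_deriv f d"
  shows "d \<in> borel_measurable lborel" "integrable lborel (\<lambda>x. (d x)^2)"
    "a \<le> b \<Longrightarrow> f b - f a = (LINT x:{a..b}|lborel. d x)"
  using assms unfolding is_L2_deriv_def by auto

lemma interval_integral_square_le:
  fixes g :: "real \<Rightarrow> real"
  assumes [measurable]: "g \<in> borel_measurable lborel" and g2: "integrable lborel (\<lambda>x. (g x)^2)"
    and "a \<le> b"
  shows "set_integrable lborel {a..b} g"
    "(LINT x:{a..b}|lborel. g x)^2 \<le> (b - a) * (\<integral>x. (g x)^2 \<partial>lborel)"
proof -
  let ?u = "indicator {a..b} :: real \<Rightarrow> real"
  have u2: "(\<lambda>x. (?u x)^2) = ?u" by (auto simp: indicator_def)
  have u2_int: "integrable lborel (\<lambda>x. (?u x)^2)"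
    unfolding u2 using \<open>a \<le> b\<close> by (intro integrable_real_indicator) auto
  have "integrable lborel (\<lambda>x. ?u x * g x)"
    by (rule integrable_mult_if_square_integrable[OF _ _ u2_int g2]) auto
  then show "set_integrable lborel {a..b} g" by (simp add: set_integrable_def)
  have "(LINT x:{a..b}|lborel. g x)^2 \<le> (\<integral>x. (?u x)^2 \<partial>lborel) * (\<integral>x. (g x)^2 \<partial>lborel)"
    unfolding set_lebesgue_integral_def
    using integral_Cauchy_Schwarz[of ?u lborel g, OF _ _ u2_int g2] by simp
  also have "(\<integral>x. (?u x)^2 \<partial>lborel) = b - a" unfolding u2 using \<open>a \<le> b\<close> by simp
  finally show "(LINT x:{a..b}|lborel. g x)^2 \<le> (b - a) * (\<integral>x. (g x)^2 \<partial>lborel)" .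
qed

lemma is_L2_deriv_lincomb:
  assumes f: "is_L2_deriv f d" and g: "is_L2_deriv g e"
  shows "is_L2_deriv (\<lambda>x. a * f x + b * g x) (\<lambda>x. a * d x + b * e x)"
  unfolding is_L2_deriv_def
proof (intro conjI allI impI)
  note [measurable] = is_L2_derivD(1)[OF f] is_L2_derivD(1)[OF g]
  show "(\<lambda>x. a * d x + b * e x) \<in> borel_measurable lborel" by measurable
  show "integrable lborel (\<lambda>x. (a * d x + b * e x)^2)"
    using f g by (intro square_integrable_lincomb) (auto dest: is_L2_derivD)
  fix u v :: real assume "u \<le> v"
  have si: "set_integrable lborel {u..v} d" "set_integrable lborel {u..v} e"
    using f g \<open>u \<le> v\<close> unfolding is_L2_deriv_def by auto
  then show "set_integrable lborel {u..v} (\<lambda>x. a * d x + b * e x)"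
    by (intro set_integral_add set_integrable_mult_right)
  have "(LINT x:{u..v}|lborel. a * d x + b * e x)
      = a * (LINT x:{u..v}|lborel. d x) + b * (LINT x:{u..v}|lborel. e x)"
    using si by (simp add: set_integral_add set_integrable_mult_right set_integral_mult_right)
  then show "a * f v + b * g v - (a * f u + b * g u) = (LINT x:{u..v}|lborel. a * d x + b * e x)"
    using is_L2_derivD(3)[OF f \<open>u \<le> v\<close>] is_L2_derivD(3)[OF g \<open>u \<le> v\<close>]
    by (simp add: algebra_simps)
qed

lemma ennreal_eq_ennreal_uminus_iff: "ennreal a = ennreal (- a) \<longleftrightarrow> a = 0"
proof
  assume eq: "ennreal a = ennreal (- a)"
  show "a = 0"
  proof (cases "0 \<le> a")
    case True
    then have "ennreal (- a) = 0" by (simp add: ennreal_eq_0_iff)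
    with eq True show ?thesis by (simp add: ennreal_eq_0_iff)
  next
    case False
    then have "ennreal a = 0" by (simp add: ennreal_eq_0_iff)
    with eq False show ?thesis by (simp add: ennreal_eq_0_iff)
  qed
qed simp

text \<open>The positive and negative parts of \<open>g\<close> define measures agreeing on all
  rays \<open>{x<..}\<close>, hence equal measures, hence equal densities.\<close>

lemma AE_zero_if_integrals_greaterThan_zero:
  fixes g :: "real \<Rightarrow> real"
  assumes g: "integrable lborel g" and zero: "\<And>x. (LINT y:{x<..}|lborel. g y) = 0"
  shows "AE y in lborel. g y = 0"
proof -
  have [measurable]: "g \<in> borel_measurable lborel" using g by auto
  have ray: "(\<integral>\<^sup>+y. ennreal (g y) * indicator {x<..} y \<partial>lborel)
      = (\<integral>\<^sup>+y. ennreal (- g y) * indicator {x<..} y \<partial>lborel)" for x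
  proof -
    let ?h = "\<lambda>y. indicator {x<..} y * g y"
    have h: "integrable lborel ?h"
      using integrable_mult_indicator[OF _ g, of "{x<..}"] by simp
    have "(\<integral>\<^sup>+y. ennreal (?h y) \<partial>lborel) = ennreal (enn2real (\<integral>\<^sup>+y. ennreal (?h y) \<partial>lborel))"
      using integrableD(2)[OF h] by (simp add: less_top)
    also have "enn2real (\<integral>\<^sup>+y. ennreal (?h y) \<partial>lborel) = enn2real (\<integral>\<^sup>+y. ennreal (- ?h y) \<partial>lborel)"
      using real_lebesgue_integral_def[OF h] zero[of x] by (simp add: set_lebesgue_integral_def)
    also have "ennreal \<dots> = (\<integral>\<^sup>+y. ennreal (- ?h y) \<partial>lborel)"
      using integrableD(3)[OF h] by (simp add: less_top)
    finally have "(\<integral>\<^sup>+y. ennreal (?h y) \<partial>lborel) = (\<integral>\<^sup>+y. ennreal (- ?h y) \<partial>lborel)" .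
    moreover have scaled: "(\<integral>\<^sup>+y. ennreal (s * g y) * indicator {x<..} y \<partial>lborel)
        = (\<integral>\<^sup>+y. ennreal (s * ?h y) \<partial>lborel)" for s :: real
      by (auto intro!: nn_integral_cong simp: indicator_def)
    ultimately show ?thesis using scaled[of 1] scaled[of "-1"] by simp
  qed
  have "density lborel (\<lambda>y. ennreal (g y)) = density lborel (\<lambda>y. ennreal (- g y))"
  proof (rule measure_eqI_lessThan)
    fix x
    have "emeasure (density lborel (\<lambda>y. ennreal (g y))) {x<..} \<le> (\<integral>\<^sup>+y. ennreal (g y) \<partial>lborel)"
      by (subst emeasure_density) (auto intro!: nn_integral_mono simp: indicator_def)
    moreover have "(\<integral>\<^sup>+y. ennreal (g y) \<partial>lborel) < \<infinity>"
      using integrableD(2)[OF g] by (simp add: less_top)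
    ultimately show "emeasure (density lborel (\<lambda>y. ennreal (g y))) {x<..} < \<infinity>"
      by (rule le_less_trans)
    show "emeasure (density lborel (\<lambda>y. ennreal (g y))) {x<..}
        = emeasure (density lborel (\<lambda>y. ennreal (- g y))) {x<..}"
      using ray[of x] by (simp add: emeasure_density)
  qed simp_all
  then have "AE y in lborel. ennreal (g y) = ennreal (- g y)"
    by (intro sigma_finite_measure.density_unique[OF sigma_finite_lborel]) auto
  then show ?thesis by (simp add: ennreal_eq_ennreal_uminus_iff)
qed

lemma AE_zero_if_interval_integrals_zero:
  fixes e :: "real \<Rightarrow> real"
  assumes [measurable]: "e \<in> borel_measurable lborel"
    and si: "\<And>a b. a \<le> b \<Longrightarrow> set_integrable lborel {a..b} e"
    and zero: "\<And>a b. a \<le> b \<Longrightarrow> (LINT x:{a..b}|lborel. e x) = 0"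
  shows "AE x in lborel. e x = 0"
proof -
  have "AE y in lborel. y \<in> {- real n..real n} \<longrightarrow> e y = 0" for n :: nat
  proof -
    let ?g = "\<lambda>y. indicator {- real n..real n} y * e y"
    have g: "integrable lborel ?g"
      using si[of "- real n" "real n"] by (simp add: set_integrable_def)
    have "(LINT y:{x<..}|lborel. ?g y) = 0" for x
    proof -
      have "(LINT y:{x<..}|lborel. ?g y) = (LINT y:{- real n..real n} \<inter> {x<..}|lborel. e y)"
        by (simp add: set_lebesgue_integral_def indicator_inter_arith mult_ac)
      also have "\<dots> = (LINT y:{max x (- real n)..real n}|lborel. e y)"
        by (rule set_integral_cong_set)
          (auto simp: set_borel_measurable_def max_def intro!: eventually_mono[OF AE_lborel_singleton[of x]])
      also have "\<dots> = 0"
        using zero by (cases "max x (- real n) \<le> real n") (auto simp: set_lebesgue_integral_def)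
      finally show ?thesis .
    qed
    then have "AE y in lborel. ?g y = 0" by (rule AE_zero_if_integrals_greaterThan_zero[OF g])
    then show ?thesis by eventually_elim (auto simp: indicator_def)
  qed
  then have "AE y in lborel. \<forall>n::nat. y \<in> {- real n..real n} \<longrightarrow> e y = 0"
    by (subst AE_all_countable) auto
  then show ?thesis
  proof eventually_elim
    case (elim y)
    obtain n :: nat where "\<bar>y\<bar> \<le> real n" using real_arch_simple by blast
    then have "y \<in> {- real n..real n}" by (simp add: abs_le_iff)
    with elim show ?case by blast
  qed
qed

lemma is_L2_deriv_unique:
  assumes d1: "is_L2_deriv f d1" and d2: "is_L2_deriv f d2"
  shows "AE x in lborel. d1 x = d2 x"
proof -
  have diff: "is_L2_deriv (\<lambda>x. 1 * f x + (-1) * f x) (\<lambda>x. 1 * d1 x + (-1) * d2 x)"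
    by (rule is_L2_deriv_lincomb[OF d1 d2])
  have "AE x in lborel. d1 x - d2 x = 0"
  proof (rule AE_zero_if_interval_integrals_zero)
    show "(\<lambda>x. d1 x - d2 x) \<in> borel_measurable lborel"
      using is_L2_derivD(1)[OF diff] by simp
    fix a b :: real assume "a \<le> b"
    then show "set_integrable lborel {a..b} (\<lambda>x. d1 x - d2 x)"
      "(LINT x:{a..b}|lborel. d1 x - d2 x) = 0"
      using diff is_L2_derivD(3)[OF diff \<open>a \<le> b\<close>] unfolding is_L2_deriv_def by auto
  qed
  then show ?thesis by simp
qed

lemma is_L2_deriv_Holder:
  assumes "is_L2_deriv f d"
  shows "(f y - f x)^2 \<le> \<bar>y - x\<bar> * (\<integral>t. (d t)^2 \<partial>lborel)"
proof -
  have le: "(f b - f a)^2 \<le> (b - a) * (\<integral>t. (d t)^2 \<partial>lborel)" if "a \<le> b" for a b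
    using interval_integral_square_le(2)[OF is_L2_derivD(1,2)[OF assms] that]
      is_L2_derivD(3)[OF assms that] by simp
  show ?thesis
    using le[of x y] le[of y x] by (cases "x \<le> y") (simp_all add: power2_commute)
qed

lemma continuous_on_if_is_L2_deriv:
  assumes "is_L2_deriv f d"
  shows "continuous_on UNIV f"
proof (intro continuous_at_imp_continuous_on ballI)
  fix x :: real
  define C where "C = (\<integral>t. (d t)^2 \<partial>lborel)"
  have "((\<lambda>y. f y - f x) \<longlongrightarrow> 0) (at x)"
  proof (rule Lim_null_comparison)
    have "\<bar>f y - f x\<bar> \<le> sqrt (\<bar>y - x\<bar> * C)" for y
      using real_sqrt_le_mono[OF is_L2_deriv_Holder[OF assms, of y x]] by (simp add: C_def)
    then show "\<forall>\<^sub>F y in at x. norm (f y - f x) \<le> sqrt (\<bar>y - x\<bar> * C)" by simp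
    have "((\<lambda>y. sqrt (\<bar>y - x\<bar> * C)) \<longlongrightarrow> sqrt (\<bar>x - x\<bar> * C)) (at x)"
      by (intro tendsto_intros)
    then show "((\<lambda>y. sqrt (\<bar>y - x\<bar> * C)) \<longlongrightarrow> 0) (at x)" by simp
  qed
  then show "isCont f x" by (simp add: isCont_def LIM_zero_iff)
qed

lemma is_L2_deriv_limit:
  assumes s: "\<And>n. is_L2_deriv (s n) (Ds n)" and lim: "\<And>x. (\<lambda>n. s n x) \<longlonglongrightarrow> F x"
    and [measurable]: "d \<in> borel_measurable lborel" and d2: "integrable lborel (\<lambda>x. (d x)^2)"
    and Ds_lim: "(\<lambda>n. \<integral>x. (Ds n x - d x)^2 \<partial>lborel) \<longlonglongrightarrow> 0"
  shows "is_L2_deriv F d"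
  unfolding is_L2_deriv_def
proof (intro conjI allI impI)
  fix a b :: real assume ab: "a \<le> b"
  note [measurable] = is_L2_derivD(1)[OF s]
  show d_int: "set_integrable lborel {a..b} d" by (rule interval_integral_square_le(1)[OF _ d2 ab]) simp
  have Ds_int: "set_integrable lborel {a..b} (Ds n)" for n
    using s unfolding is_L2_deriv_def using ab by blast
  have "(\<lambda>n. LINT x:{a..b}|lborel. Ds n x - d x) \<longlonglongrightarrow> 0"
  proof (rule Lim_null_comparison)
    have "(LINT x:{a..b}|lborel. Ds n x - d x)^2 \<le> (b - a) * (\<integral>x. (Ds n x - d x)^2 \<partial>lborel)" for n
      by (rule interval_integral_square_le(2)[OF _ square_integrable_diff ab])
        (auto intro: d2 is_L2_derivD(2)[OF s])
    from real_sqrt_le_mono[OF this]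
    show "\<forall>\<^sub>F n in sequentially. norm (LINT x:{a..b}|lborel. Ds n x - d x)
        \<le> sqrt ((b - a) * (\<integral>x. (Ds n x - d x)^2 \<partial>lborel))" by simp
    show "(\<lambda>n. sqrt ((b - a) * (\<integral>x. (Ds n x - d x)^2 \<partial>lborel))) \<longlonglongrightarrow> 0"
      using tendsto_real_sqrt[OF tendsto_mult_left[OF Ds_lim, of "b - a"]] by simp
  qed
  moreover have "(LINT x:{a..b}|lborel. Ds n x - d x) = (s n b - s n a) - (LINT x:{a..b}|lborel. d x)" for n
    using is_L2_derivD(3)[OF s ab] Ds_int d_int by (simp add: set_integral_diff)
  ultimately have "(\<lambda>n. s n b - s n a) \<longlonglongrightarrow> (LINT x:{a..b}|lborel. d x)"
    by (simp add: LIM_zero_iff)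
  moreover have "(\<lambda>n. s n b - s n a) \<longlonglongrightarrow> F b - F a" by (intro tendsto_diff lim)
  ultimately show "F b - F a = (LINT x:{a..b}|lborel. d x)" by (rule LIMSEQ_unique[rotated])
qed (use d2 in auto)

section \<open>The space Hreal\<close>

lemma HrealD:
  assumes "f \<in> Hreal"
  shows "is_L2_deriv f (wderiv f)" "integrable lborel (\<lambda>x. eta0 x * (f x)^2)"
    "f \<in> borel_measurable lborel"
proof -
  show d: "is_L2_deriv f (wderiv f)"
    using assms someI_ex[of "is_L2_deriv f"] unfolding Hreal_def wderiv_def by auto
  show "integrable lborel (\<lambda>x. eta0 x * (f x)^2)" using assms unfolding Hreal_def by auto
  show "f \<in> borel_measurable lborel"
    using continuous_on_if_is_L2_deriv[OF d] by (simp add: borel_measurable_continuous_onI)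
qed

lemma HrealI: "is_L2_deriv f d \<Longrightarrow> integrable lborel (\<lambda>x. eta0 x * (f x)^2) \<Longrightarrow> f \<in> Hreal"
  unfolding Hreal_def using continuous_on_if_is_L2_deriv by blast

lemma zero_in_Hreal: "(\<lambda>x. 0) \<in> Hreal"
  by (rule HrealI[of _ "\<lambda>x. 0"]) (simp_all add: is_L2_deriv_def set_integrable_def)

lemma Hreal_lincomb:
  assumes f: "f \<in> Hreal" and g: "g \<in> Hreal"
  shows "(\<lambda>x. a * f x + b * g x) \<in> Hreal"
proof (rule HrealI)
  show "is_L2_deriv (\<lambda>x. a * f x + b * g x) (\<lambda>x. a * wderiv f x + b * wderiv g x)"
    using is_L2_deriv_lincomb[OF HrealD(1)[OF f] HrealD(1)[OF g]] .
  show "integrable lborel (\<lambda>x. eta0 x * (a * f x + b * g x)^2)"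
    using HrealD[OF f] HrealD[OF g]
    by (intro weighted_square_integrable_lincomb) (auto simp: eta0_nonneg)
qed

lemma Hreal_diff: "f \<in> Hreal \<Longrightarrow> g \<in> Hreal \<Longrightarrow> (\<lambda>x. f x - g x) \<in> Hreal"
  using Hreal_lincomb[of f g 1 "-1"] by simp

lemma ip0_eq:
  assumes f: "is_L2_deriv f d" and g: "is_L2_deriv g e"
  shows "ip0 f g = (\<integral>x. d x * e x \<partial>lborel) + (\<integral>x. eta0 x * f x * g x \<partial>lborel)"
proof -
  have f': "is_L2_deriv f (wderiv f)" and g': "is_L2_deriv g (wderiv g)"
    using someI[of "is_L2_deriv f", OF f] someI[of "is_L2_deriv g", OF g] by (simp_all add: wderiv_def)
  note [measurable] = is_L2_derivD(1)[OF f] is_L2_derivD(1)[OF g]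
    is_L2_derivD(1)[OF f'] is_L2_derivD(1)[OF g']
  have "AE x in lborel. wderiv f x = d x" "AE x in lborel. wderiv g x = e x"
    using is_L2_deriv_unique f g f' g' by blast+
  then have "AE x in lborel. wderiv f x * wderiv g x = d x * e x" by eventually_elim simp
  then have "(\<integral>x. wderiv f x * wderiv g x \<partial>lborel) = (\<integral>x. d x * e x \<partial>lborel)"
    by (rule integral_cong_AE[rotated 2]) measurable
  then show ?thesis unfolding ip0_def by simp
qed

lemma ip0_self_diff:
  assumes "is_L2_deriv f d" "is_L2_deriv g e"
  shows "ip0 (\<lambda>x. f x - g x) (\<lambda>x. f x - g x)
    = (\<integral>x. (d x - e x)^2 \<partial>lborel) + (\<integral>x. eta0 x * (f x - g x)^2 \<partial>lborel)"
  using ip0_eq[OF is_L2_deriv_lincomb[OF assms, of 1 "-1"] is_L2_deriv_lincomb[OF assms, of 1 "-1"]]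
  by (simp add: power2_eq_square mult.assoc)

lemma ip0_commute: "ip0 f g = ip0 g f"
  unfolding ip0_def by (simp add: mult_ac)

lemma ip0_lincomb_left:
  assumes f: "f \<in> Hreal" and g: "g \<in> Hreal" and h: "h \<in> Hreal"
  shows "ip0 (\<lambda>x. a * f x + b * g x) h = a * ip0 f h + b * ip0 g h"
proof -
  have deriv: "integrable lborel (\<lambda>x. wderiv u x * wderiv h x)" if "u \<in> Hreal" for u
    using HrealD(1)[OF that] HrealD(1)[OF h]
    by (intro integrable_mult_if_square_integrable) (auto dest: is_L2_derivD(1,2))
  have weighted: "integrable lborel (\<lambda>x. eta0 x * u x * h x)" if "u \<in> Hreal" for u
    using HrealD[OF that] HrealD[OF h] by (intro integrable_weighted_mult) (auto simp: eta0_nonneg)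
  have "(\<integral>x. (a * wderiv f x + b * wderiv g x) * wderiv h x \<partial>lborel)
      = (\<integral>x. a * (wderiv f x * wderiv h x) + b * (wderiv g x * wderiv h x) \<partial>lborel)"
    by (simp add: algebra_simps)
  also have "\<dots> = a * (\<integral>x. wderiv f x * wderiv h x \<partial>lborel) + b * (\<integral>x. wderiv g x * wderiv h x \<partial>lborel)"
    using deriv[OF f] deriv[OF g] by simp
  finally have deriv_part: "(\<integral>x. (a * wderiv f x + b * wderiv g x) * wderiv h x \<partial>lborel)
      = a * (\<integral>x. wderiv f x * wderiv h x \<partial>lborel) + b * (\<integral>x. wderiv g x * wderiv h x \<partial>lborel)" .
  have "(\<integral>x. eta0 x * (a * f x + b * g x) * h x \<partial>lborel)
      = (\<integral>x. a * (eta0 x * f x * h x) + b * (eta0 x * g x * h x) \<partial>lborel)"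
    by (simp add: algebra_simps)
  also have "\<dots> = a * (\<integral>x. eta0 x * f x * h x \<partial>lborel) + b * (\<integral>x. eta0 x * g x * h x \<partial>lborel)"
    using weighted[OF f] weighted[OF g] by simp
  finally show ?thesis
    using deriv_part ip0_eq[OF is_L2_deriv_lincomb[OF HrealD(1)[OF f] HrealD(1)[OF g]] HrealD(1)[OF h]]
    unfolding ip0_def by (simp add: algebra_simps)
qed

lemma ip0_self:
  assumes "is_L2_deriv f d"
  shows "ip0 f f = (\<integral>x. (d x)^2 \<partial>lborel) + (\<integral>x. eta0 x * (f x)^2 \<partial>lborel)"
  using ip0_eq[OF assms assms] by (simp add: power2_eq_square mult.assoc)

lemma ip0_self_ge:
  assumes "f \<in> Hreal"
  shows "(\<integral>x. (wderiv f x)^2 \<partial>lborel) \<le> ip0 f f"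
    "(\<integral>x. eta0 x * (f x)^2 \<partial>lborel) \<le> ip0 f f" "0 \<le> ip0 f f"
proof -
  have "0 \<le> (\<integral>x. (wderiv f x)^2 \<partial>lborel)" "0 \<le> (\<integral>x. eta0 x * (f x)^2 \<partial>lborel)"
    by (simp_all add: eta0_nonneg)
  then show "(\<integral>x. (wderiv f x)^2 \<partial>lborel) \<le> ip0 f f"
    "(\<integral>x. eta0 x * (f x)^2 \<partial>lborel) \<le> ip0 f f" "0 \<le> ip0 f f"
    using ip0_self[OF HrealD(1)[OF assms]] by linarith+
qed

lemma Hreal_Holder:
  assumes "f \<in> Hreal"
  shows "(f y - f x)^2 \<le> \<bar>y - x\<bar> * ip0 f f"
  using is_L2_deriv_Holder[OF HrealD(1)[OF assms], of y x] ip0_self_ge(1)[OF assms]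
    mult_left_mono[of _ "ip0 f f" "\<bar>y - x\<bar>"] by fastforce

lemma Hreal_square_small_somewhere:
  assumes f: "f \<in> Hreal" and c: "\<And>y. y \<in> {-1..1} \<Longrightarrow> c \<le> eta0 y"
  obtains z where "z \<in> {-1..1}" "2 * c * (f z)^2 \<le> ip0 f f"
proof -
  note [measurable] = HrealD(3)[OF f]
  have "continuous_on {-1..1} (\<lambda>y. (f y)^2)"
    using continuous_on_if_is_L2_deriv[OF HrealD(1)[OF f]]
    by (auto intro!: continuous_intros intro: continuous_on_subset)
  then obtain z where z: "z \<in> {-1..1}" "\<And>y. y \<in> {-1..1} \<Longrightarrow> (f z)^2 \<le> (f y)^2"
    using continuous_attains_inf[of "{-1..1::real}" "\<lambda>y. (f y)^2"] by auto
  let ?I = "indicator {-1..1::real} :: real \<Rightarrow> real"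
  have I: "integrable lborel ?I" by (intro integrable_real_indicator) auto
  have weighted: "integrable lborel (\<lambda>y. ?I y * (eta0 y * (f y)^2))"
    using integrable_mult_indicator[OF _ HrealD(2)[OF f], of "{-1..1}"] by simp
  have const: "integrable lborel (\<lambda>y. ?I y * (c * (f z)^2))" using I by simp
  have "2 * c * (f z)^2 = (\<integral>y. ?I y * (c * (f z)^2) \<partial>lborel)"
    using I by simp
  also have "\<dots> \<le> (\<integral>y. ?I y * (eta0 y * (f y)^2) \<partial>lborel)"
    using c z by (intro integral_mono[OF const weighted])
      (auto simp: indicator_def eta0_nonneg intro!: mult_mono)
  also have "\<dots> \<le> (\<integral>y. eta0 y * (f y)^2 \<partial>lborel)"
    using weighted HrealD(2)[OF f]
    by (intro integral_mono) (auto simp: indicator_def eta0_nonneg)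
  also have "\<dots> \<le> ip0 f f" by (rule ip0_self_ge(2)[OF f])
  finally show ?thesis using z(1) that by blast
qed

lemma Hreal_square_le:
  obtains K where "0 < K" "\<And>f x. f \<in> Hreal \<Longrightarrow> (f x)^2 \<le> K * (1 + \<bar>x\<bar>) * ip0 f f"
proof -
  obtain c where c: "0 < c" "\<And>y. y \<in> {-1..1} \<Longrightarrow> c \<le> eta0 y"
    using eta0_ge_on_compact[of "{-1..1}"] by auto
  have "(f x)^2 \<le> (1 / c + 2) * (1 + \<bar>x\<bar>) * ip0 f f" if f: "f \<in> Hreal" for f x
  proof -
    obtain z where z: "z \<in> {-1..1}" "2 * c * (f z)^2 \<le> ip0 f f"
      using Hreal_square_small_somewhere[OF f c(2)] by blast
    then have fz: "2 * (f z)^2 \<le> ip0 f f / c" using c(1) by (simp add: field_simps)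
    have ip: "0 \<le> ip0 f f" by (rule ip0_self_ge(3)[OF f])
    have "(f x)^2 \<le> 2 * (f z)^2 + 2 * (f x - f z)^2"
      using sum_squares_bound[of "f x - f z" "f z"] by (simp add: power2_eq_square algebra_simps)
    also have "\<dots> \<le> ip0 f f / c + 2 * ((1 + \<bar>x\<bar>) * ip0 f f)"
    proof -
      have "\<bar>x - z\<bar> \<le> 1 + \<bar>x\<bar>" using z(1) by auto
      then have "(f x - f z)^2 \<le> (1 + \<bar>x\<bar>) * ip0 f f"
        using Hreal_Holder[OF f, of x z] mult_right_mono[OF _ ip] by (meson order_trans)
      then show ?thesis using fz by linarith
    qed
    also have "\<dots> \<le> (1 + \<bar>x\<bar>) * (ip0 f f / c) + 2 * ((1 + \<bar>x\<bar>) * ip0 f f)"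
      using mult_right_mono[of 1 "1 + \<bar>x\<bar>" "ip0 f f / c"] ip c(1) by simp
    finally show ?thesis by (simp add: algebra_simps add_divide_distrib)
  qed
  moreover have "0 < 1 / c + 2" using c(1) by (simp add: add_pos_pos)
  ultimately show ?thesis using that by blast
qed

lemma Hreal_zero_if_ip0_self_zero:
  assumes "f \<in> Hreal" "ip0 f f = 0"
  shows "f = (\<lambda>x. 0)"
proof
  fix x
  obtain K where "\<And>f x. f \<in> Hreal \<Longrightarrow> (f x)^2 \<le> K * (1 + \<bar>x\<bar>) * ip0 f f"
    using Hreal_square_le by blast
  from this[OF assms(1), of x] assms(2) show "f x = 0" by simp
qed

lemma Hreal_pointwise_Cauchy:
  assumes s: "\<And>n. s n \<in> Hreal"
    and cauchy: "\<And>e. e > 0 \<Longrightarrow> \<exists>N. \<forall>m\<ge>N. \<forall>n\<ge>N. ip0 (\<lambda>x. s m x - s n x) (\<lambda>x. s m x - s n x) < e"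
  shows "Cauchy (\<lambda>n. s n x)"
proof (rule metric_CauchyI)
  fix e :: real assume e: "0 < e"
  obtain K where K: "0 < K" "\<And>f x. f \<in> Hreal \<Longrightarrow> (f x)^2 \<le> K * (1 + \<bar>x\<bar>) * ip0 f f"
    using Hreal_square_le by blast
  define c where "c = K * (1 + \<bar>x\<bar>)"
  have c: "0 < c" unfolding c_def using K(1) by (simp add: add_pos_nonneg)
  obtain N where N: "\<forall>m\<ge>N. \<forall>n\<ge>N. ip0 (\<lambda>x. s m x - s n x) (\<lambda>x. s m x - s n x) < e^2 / c"
    using cauchy[of "e^2 / c"] e c by auto
  have "dist (s m x) (s n x) < e" if "m \<ge> N" "n \<ge> N" for m n
  proof -
    have "(s m x - s n x)^2 \<le> c * ip0 (\<lambda>x. s m x - s n x) (\<lambda>x. s m x - s n x)"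
      using K(2)[OF Hreal_diff[OF s[of m] s[of n]], of x] unfolding c_def by simp
    also have "\<dots> < e^2" using N that c by (simp add: field_simps)
    finally show ?thesis
      using power2_less_imp_less[of "\<bar>s m x - s n x\<bar>" e] e by (simp add: dist_real_def)
  qed
  then show "\<exists>N. \<forall>m\<ge>N. \<forall>n\<ge>N. dist (s m x) (s n x) < e" by blast
qed

lemma Hreal_Cauchy_imp_parts_Cauchy:
  assumes s: "\<And>n. s n \<in> Hreal"
    and cauchy: "\<And>e. e > 0 \<Longrightarrow> \<exists>N. \<forall>m\<ge>N. \<forall>n\<ge>N. ip0 (\<lambda>x. s m x - s n x) (\<lambda>x. s m x - s n x) < e"
    and "e > 0"
  shows "\<exists>N. \<forall>m\<ge>N. \<forall>n\<ge>N. (\<integral>x. (wderiv (s m) x - wderiv (s n) x)^2 \<partial>lborel) < e"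
    "\<exists>N. \<forall>m\<ge>N. \<forall>n\<ge>N. (\<integral>x. (sqrt (eta0 x) * s m x - sqrt (eta0 x) * s n x)^2 \<partial>lborel) < e"
proof -
  note sD = HrealD(1)[OF s]
  have "0 \<le> (\<integral>x. (wderiv (s m) x - wderiv (s n) x)^2 \<partial>lborel)"
    "0 \<le> (\<integral>x. eta0 x * (s m x - s n x)^2 \<partial>lborel)" for m n
    by (simp_all add: eta0_nonneg)
  then have "(\<integral>x. (wderiv (s m) x - wderiv (s n) x)^2 \<partial>lborel) \<le> ip0 (\<lambda>x. s m x - s n x) (\<lambda>x. s m x - s n x)"
    "(\<integral>x. (sqrt (eta0 x) * s m x - sqrt (eta0 x) * s n x)^2 \<partial>lborel)
      \<le> ip0 (\<lambda>x. s m x - s n x) (\<lambda>x. s m x - s n x)" for m n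
    using ip0_self_diff[OF sD sD, of m n] by (simp_all add: sqrt_weight_mult eta0_nonneg)
  with cauchy[OF \<open>e > 0\<close>]
  show "\<exists>N. \<forall>m\<ge>N. \<forall>n\<ge>N. (\<integral>x. (wderiv (s m) x - wderiv (s n) x)^2 \<partial>lborel) < e"
    "\<exists>N. \<forall>m\<ge>N. \<forall>n\<ge>N. (\<integral>x. (sqrt (eta0 x) * s m x - sqrt (eta0 x) * s n x)^2 \<partial>lborel) < e"
    by (meson le_less_trans)+
qed

lemma Hreal_complete:
  assumes s: "\<And>n. s n \<in> Hreal"
    and cauchy: "\<And>e. e > 0 \<Longrightarrow> \<exists>N. \<forall>m\<ge>N. \<forall>n\<ge>N. ip0 (\<lambda>x. s m x - s n x) (\<lambda>x. s m x - s n x) < e"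
  shows "\<exists>F\<in>Hreal. (\<lambda>n. ip0 (\<lambda>x. s n x - F x) (\<lambda>x. s n x - F x)) \<longlonglongrightarrow> 0"
proof -
  define Ds where "Ds n = wderiv (s n)" for n
  have sD: "is_L2_deriv (s n) (Ds n)" for n unfolding Ds_def using HrealD(1)[OF s] .
  note [measurable] = is_L2_derivD(1)[OF sD] HrealD(3)[OF s]
  note cauchy_parts = Hreal_Cauchy_imp_parts_Cauchy[OF s cauchy, folded Ds_def]
  obtain d where [measurable]: "d \<in> borel_measurable lborel"
    and d2: "integrable lborel (\<lambda>x. (d x)^2)" and Ds_lim: "(\<lambda>n. \<integral>x. (Ds n x - d x)^2 \<partial>lborel) \<longlonglongrightarrow> 0"
    using L2_complete[of Ds lborel] cauchy_parts(1) is_L2_derivD(2)[OF sD] by auto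
  define F where "F x = lim (\<lambda>n. s n x)" for x
  have [measurable]: "F \<in> borel_measurable lborel" unfolding F_def by measurable
  have s_lim: "(\<lambda>n. s n x) \<longlonglongrightarrow> F x" for x
    using Hreal_pointwise_Cauchy[OF s cauchy] unfolding F_def
    by (simp add: Cauchy_convergent_iff convergent_LIMSEQ_iff)
  have FD: "is_L2_deriv F d" by (rule is_L2_deriv_limit[OF sD s_lim _ d2 Ds_lim]) simp
  have lim_weighted: "AE x in lborel. (\<lambda>k. sqrt (eta0 x) * s (id k) x) \<longlonglongrightarrow> sqrt (eta0 x) * F x"
    by (intro AE_I2 tendsto_intros) (simp add: s_lim)
  have "integrable lborel (\<lambda>x. (sqrt (eta0 x) * s n x)^2)" for n
    using HrealD(2)[OF s] by (simp add: sqrt_weight_mult eta0_nonneg)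
  from L2_Cauchy_tendsto_AE_limit[OF _ _ this cauchy_parts(2) strict_mono_id lim_weighted]
  have "integrable lborel (\<lambda>x. (sqrt (eta0 x) * F x)^2)"
    "(\<lambda>n. \<integral>x. (sqrt (eta0 x) * s n x - sqrt (eta0 x) * F x)^2 \<partial>lborel) \<longlonglongrightarrow> 0"
    by measurable
  then have F_eta: "integrable lborel (\<lambda>x. eta0 x * (F x)^2)"
    and eta_lim: "(\<lambda>n. \<integral>x. eta0 x * (s n x - F x)^2 \<partial>lborel) \<longlonglongrightarrow> 0"
    by (simp_all only: sqrt_weight_mult[OF eta0_nonneg])
  have "(\<lambda>n. ip0 (\<lambda>x. s n x - F x) (\<lambda>x. s n x - F x)) \<longlonglongrightarrow> 0"
    using ip0_self_diff[OF sD FD] tendsto_add[OF Ds_lim eta_lim] by simp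
  with HrealI[OF FD F_eta] show ?thesis by blast
qed

section \<open>Riesz representation in a complete inner product space of functions\<close>

locale complete_inner_function_space =
  fixes H :: "('a \<Rightarrow> real) set" and ip :: "('a \<Rightarrow> real) \<Rightarrow> ('a \<Rightarrow> real) \<Rightarrow> real"
  assumes zero_mem: "(\<lambda>x. 0) \<in> H"
    and lincomb_mem: "f \<in> H \<Longrightarrow> g \<in> H \<Longrightarrow> (\<lambda>x. a * f x + b * g x) \<in> H"
    and ip_lincomb_left: "f \<in> H \<Longrightarrow> g \<in> H \<Longrightarrow> h \<in> H \<Longrightarrow>
      ip (\<lambda>x. a * f x + b * g x) h = a * ip f h + b * ip g h"
    and ip_commute: "f \<in> H \<Longrightarrow> g \<in> H \<Longrightarrow> ip f g = ip g f"
    and ip_self_nonneg: "f \<in> H \<Longrightarrow> 0 \<le> ip f f"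
    and complete: "(\<And>n. s n \<in> H) \<Longrightarrow>
      (\<And>e. e > 0 \<Longrightarrow> \<exists>N. \<forall>m\<ge>N. \<forall>n\<ge>N. ip (\<lambda>x. s m x - s n x) (\<lambda>x. s m x - s n x) < e) \<Longrightarrow>
      \<exists>u\<in>H. (\<lambda>n. ip (\<lambda>x. s n x - u x) (\<lambda>x. s n x - u x)) \<longlonglongrightarrow> 0"
begin

lemma diff_mem: "f \<in> H \<Longrightarrow> g \<in> H \<Longrightarrow> (\<lambda>x. f x - g x) \<in> H"
  using lincomb_mem[of f g 1 "-1"] by simp

lemma ip_diff_left: "f \<in> H \<Longrightarrow> g \<in> H \<Longrightarrow> h \<in> H \<Longrightarrow> ip (\<lambda>x. f x - g x) h = ip f h - ip g h"
  using ip_lincomb_left[of f g h 1 "-1"] by simp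

lemma ip_self_lincomb:
  assumes f: "f \<in> H" and g: "g \<in> H"
  shows "ip (\<lambda>x. a * f x + b * g x) (\<lambda>x. a * f x + b * g x) = a^2 * ip f f + 2 * a * b * ip f g + b^2 * ip g g"
proof -
  have fg: "(\<lambda>x. a * f x + b * g x) \<in> H" by (rule lincomb_mem[OF f g])
  show ?thesis
    using ip_lincomb_left[OF f g fg, of a b] ip_commute[OF f fg] ip_commute[OF g fg]
      ip_lincomb_left[OF f g f, of a b] ip_lincomb_left[OF f g g, of a b] ip_commute[OF f g]
    by (simp add: power2_eq_square algebra_simps)
qed

lemma Cauchy_Schwarz:
  assumes "f \<in> H" "g \<in> H"
  shows "(ip f g)^2 \<le> ip f f * ip g g"
proof (rule nonneg_quadratic_imp_discriminant_le)
  fix t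
  show "0 \<le> ip f f + 2 * t * ip f g + t^2 * ip g g"
    using ip_self_nonneg[OF lincomb_mem[OF assms, of 1 t]] ip_self_lincomb[OF assms, of 1 t] by simp
qed

lemma ip_tendsto_left:
  assumes s: "\<And>n. s n \<in> H" and u: "u \<in> H" and g: "g \<in> H"
    and lim: "(\<lambda>n. ip (\<lambda>x. s n x - u x) (\<lambda>x. s n x - u x)) \<longlonglongrightarrow> 0"
  shows "(\<lambda>n. ip (s n) g) \<longlonglongrightarrow> ip u g"
proof -
  have "(\<lambda>n. ip (s n) g - ip u g) \<longlonglongrightarrow> 0"
  proof (rule Lim_null_comparison)
    have "(ip (s n) g - ip u g)^2 \<le> ip (\<lambda>x. s n x - u x) (\<lambda>x. s n x - u x) * ip g g" for n
      using Cauchy_Schwarz[OF diff_mem[OF s u] g] ip_diff_left[OF s u g] by simp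
    from real_sqrt_le_mono[OF this]
    show "\<forall>\<^sub>F n in sequentially. norm (ip (s n) g - ip u g)
        \<le> sqrt (ip (\<lambda>x. s n x - u x) (\<lambda>x. s n x - u x) * ip g g)" by simp
    show "(\<lambda>n. sqrt (ip (\<lambda>x. s n x - u x) (\<lambda>x. s n x - u x) * ip g g)) \<longlonglongrightarrow> 0"
      using tendsto_real_sqrt[OF tendsto_mult_right[OF lim, of "ip g g"]] by simp
  qed
  then show ?thesis by (simp add: LIM_zero_iff)
qed

lemma representer_unique:
  assumes definite: "\<And>f. f \<in> H \<Longrightarrow> ip f f = 0 \<Longrightarrow> f = (\<lambda>x. 0)"
    and u: "u \<in> H" and v: "v \<in> H" and eq: "\<And>g. g \<in> H \<Longrightarrow> ip u g = ip v g"
  shows "u = v"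
proof -
  have "ip (\<lambda>x. u x - v x) (\<lambda>x. u x - v x) = 0"
    using ip_diff_left[OF u v diff_mem[OF u v]] eq[OF diff_mem[OF u v]] by simp
  then have "(\<lambda>x. u x - v x) = (\<lambda>x. 0)" by (rule definite[OF diff_mem[OF u v]])
  then show "u = v" by (simp add: fun_eq_iff)
qed

end

text \<open>The representer of \<open>L\<close> is the minimizer of the energy \<open>\<langle>g, g\<rangle> - 2 L g\<close>: a minimizing
  sequence is Cauchy by the parallelogram law, and the first variation of the energy
  vanishes at its limit.\<close>

locale bounded_linear_functional_on = complete_inner_function_space H ip
  for H :: "('a \<Rightarrow> real) set" and ip +
  fixes L :: "('a \<Rightarrow> real) \<Rightarrow> real" and K :: real
  assumes L_lincomb: "f \<in> H \<Longrightarrow> g \<in> H \<Longrightarrow> L (\<lambda>x. a * f x + b * g x) = a * L f + b * L g"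
    and L_bounded: "g \<in> H \<Longrightarrow> \<bar>L g\<bar> \<le> K * sqrt (ip g g)"
    and K_nonneg: "0 \<le> K"
begin

definition energy :: "('a \<Rightarrow> real) \<Rightarrow> real" where
  "energy g = ip g g - 2 * L g"

lemma energy_lower_bound:
  assumes "g \<in> H"
  shows "- (K^2) \<le> energy g"
proof -
  have "L g \<le> K * sqrt (ip g g)" using L_bounded[OF assms] by simp
  moreover have "(sqrt (ip g g))^2 = ip g g" using ip_self_nonneg[OF assms] by simp
  then have "0 \<le> ip g g - 2 * (K * sqrt (ip g g)) + K^2"
    using zero_le_power2[of "sqrt (ip g g) - K"] by (simp add: power2_diff mult_ac)
  ultimately show ?thesis unfolding energy_def by linarith
qed

lemma energy_add_scaled:
  assumes f: "f \<in> H" and g: "g \<in> H"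
  shows "energy (\<lambda>x. 1 * f x + t * g x) = energy f + 2 * t * (ip f g - L g) + t^2 * ip g g"
  using ip_self_lincomb[OF f g, of 1 t] L_lincomb[OF f g, of 1 t]
  unfolding energy_def by (simp add: algebra_simps)

lemma energy_parallelogram:
  assumes f: "f \<in> H" and g: "g \<in> H"
  shows "ip (\<lambda>x. f x - g x) (\<lambda>x. f x - g x)
    = 2 * energy f + 2 * energy g - 4 * energy (\<lambda>x. (1/2) * f x + (1/2) * g x)"
  using ip_self_lincomb[OF f g, of 1 "-1"] ip_self_lincomb[OF f g, of "1/2" "1/2"]
    L_lincomb[OF f g, of "1/2" "1/2"]
  unfolding energy_def by (simp add: power2_eq_square algebra_simps)

lemma minimizing_sequence_Cauchy:
  assumes u: "\<And>n. u n \<in> H" and min: "\<And>g. g \<in> H \<Longrightarrow> m \<le> energy g"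
    and approx: "\<And>n. energy (u n) < m + 1 / (real n + 1)"
    and "e > 0"
  shows "\<exists>N. \<forall>i\<ge>N. \<forall>j\<ge>N. ip (\<lambda>x. u i x - u j x) (\<lambda>x. u i x - u j x) < e"
proof -
  obtain N :: nat where N: "4 / e < real N" using reals_Archimedean2 by blast
  have N_pos: "0 < real N" using N \<open>e > 0\<close> by (meson divide_pos_pos less_trans zero_less_numeral)
  have "ip (\<lambda>x. u i x - u j x) (\<lambda>x. u i x - u j x) < e" if "i \<ge> N" "j \<ge> N" for i j
  proof -
    have "ip (\<lambda>x. u i x - u j x) (\<lambda>x. u i x - u j x) \<le> 2 / (real i + 1) + 2 / (real j + 1)"
      using energy_parallelogram[OF u u, of i j] approx[of i] approx[of j]
        min[OF lincomb_mem[OF u[of i] u[of j], of "1/2" "1/2"]] by simp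
    also have "\<dots> \<le> 2 / real N + 2 / real N"
      using that N_pos by (intro add_mono divide_left_mono) auto
    also have "\<dots> < e" using N N_pos \<open>e > 0\<close> by (simp add: field_simps)
    finally show ?thesis .
  qed
  then show ?thesis by blast
qed

theorem representation: "\<exists>u\<in>H. \<forall>g\<in>H. ip u g = L g"
proof -
  define m where "m = Inf (energy ` H)"
  have min: "m \<le> energy g" if "g \<in> H" for g
    unfolding m_def using that energy_lower_bound by (intro cInf_lower bdd_belowI) auto
  have "\<exists>u\<in>H. energy u < m + 1 / (real n + 1)" for n
    using cInf_lessD[of "energy ` H" "m + 1 / (real n + 1)"] zero_mem unfolding m_def by auto
  then obtain u where u: "\<And>n. u n \<in> H" and approx: "\<And>n. energy (u n) < m + 1 / (real n + 1)"
    by metis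
  obtain u0 where u0: "u0 \<in> H" and lim: "(\<lambda>n. ip (\<lambda>x. u n x - u0 x) (\<lambda>x. u n x - u0 x)) \<longlonglongrightarrow> 0"
    using complete[OF u minimizing_sequence_Cauchy[OF u min approx]] by blast
  have "ip u0 g = L g" if g: "g \<in> H" for g
  proof -
    have "0 \<le> 2 * t * (ip u0 g - L g) + t^2 * ip g g" for t
    proof (rule LIMSEQ_le_const)
      have inv: "(\<lambda>n. 1 / (real n + 1)) \<longlonglongrightarrow> 0"
        using LIMSEQ_inverse_real_of_nat by (simp add: inverse_eq_divide add.commute)
      have "(\<lambda>n. 2 * t * (ip (u n) g - L g) + t^2 * ip g g + 1 / (real n + 1))
          \<longlonglongrightarrow> 2 * t * (ip u0 g - L g) + t^2 * ip g g + 0"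
        by (rule tendsto_add[OF _ inv]) (intro tendsto_intros ip_tendsto_left[OF u u0 g lim])
      then show "(\<lambda>n. 2 * t * (ip (u n) g - L g) + t^2 * ip g g + 1 / (real n + 1))
          \<longlonglongrightarrow> 2 * t * (ip u0 g - L g) + t^2 * ip g g" by simp
      have "0 \<le> 2 * t * (ip (u n) g - L g) + t^2 * ip g g + 1 / (real n + 1)" for n
        using energy_add_scaled[OF u[of n] g, of t] approx[of n]
          min[OF lincomb_mem[OF u[of n] g, of 1 t]] by linarith
      then show "\<exists>N. \<forall>n\<ge>N. 0 \<le> 2 * t * (ip (u n) g - L g) + t^2 * ip g g + 1 / (real n + 1)"
        by blast
    qed
    then have "(ip u0 g - L g)^2 \<le> 0 * ip g g"
      by (intro nonneg_quadratic_imp_discriminant_le) simp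
    then show ?thesis by simp
  qed
  with u0 show ?thesis by blast
qed

lemma representer_norm_le:
  assumes u: "u \<in> H" and rep: "\<And>g. g \<in> H \<Longrightarrow> ip u g = L g"
  shows "sqrt (ip u u) \<le> K"
proof (cases "ip u u = 0")
  case False
  have "sqrt (ip u u) * sqrt (ip u u) = ip u u" using ip_self_nonneg[OF u] by simp
  also have "\<dots> \<le> K * sqrt (ip u u)" using rep[OF u] L_bounded[OF u] by simp
  finally have "sqrt (ip u u) * sqrt (ip u u) \<le> K * sqrt (ip u u)" .
  moreover have "0 < sqrt (ip u u)" using False ip_self_nonneg[OF u] by simp
  ultimately show ?thesis by (rule mult_right_le_imp_le)
qed (simp add: K_nonneg)

end

section \<open>The operator T0\<close>

interpretation Hreal: complete_inner_function_space Hreal ip0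
  by unfold_locales
    (auto simp: zero_in_Hreal Hreal_lincomb ip0_lincomb_left ip0_self_ge Hreal_complete intro: ip0_commute)

lemma eta0_pairing_bounded_linear:
  assumes [measurable]: "F \<in> borel_measurable lborel"
    and F: "integrable lborel (\<lambda>x. eta0 x * (F x)^2)"
  shows "bounded_linear_functional_on Hreal ip0 (\<lambda>g. \<integral>x. eta0 x * F x * g x \<partial>lborel)
    (sqrt (\<integral>x. eta0 x * (F x)^2 \<partial>lborel))"
proof unfold_locales
  have pairing: "integrable lborel (\<lambda>x. eta0 x * F x * g x)" if "g \<in> Hreal" for g
    using HrealD[OF that] F by (intro integrable_weighted_mult) (auto simp: eta0_nonneg)
  fix f g a b assume f: "f \<in> Hreal" and g: "g \<in> Hreal"
  have "(\<integral>x. eta0 x * F x * (a * f x + b * g x) \<partial>lborel)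
      = (\<integral>x. a * (eta0 x * F x * f x) + b * (eta0 x * F x * g x) \<partial>lborel)"
    by (simp add: algebra_simps)
  also have "\<dots> = a * (\<integral>x. eta0 x * F x * f x \<partial>lborel) + b * (\<integral>x. eta0 x * F x * g x \<partial>lborel)"
    using pairing[OF f] pairing[OF g] by simp
  finally show "(\<integral>x. eta0 x * F x * (a * f x + b * g x) \<partial>lborel)
      = a * (\<integral>x. eta0 x * F x * f x \<partial>lborel) + b * (\<integral>x. eta0 x * F x * g x \<partial>lborel)" .
next
  fix g assume g: "g \<in> Hreal"
  have "(\<integral>x. eta0 x * F x * g x \<partial>lborel)^2
      \<le> (\<integral>x. eta0 x * (F x)^2 \<partial>lborel) * (\<integral>x. eta0 x * (g x)^2 \<partial>lborel)"
    using HrealD[OF g] F by (intro weighted_integral_Cauchy_Schwarz) (auto simp: eta0_nonneg)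
  also have "\<dots> \<le> (\<integral>x. eta0 x * (F x)^2 \<partial>lborel) * ip0 g g"
    using ip0_self_ge(2)[OF g] by (intro mult_left_mono) (simp_all add: eta0_nonneg)
  finally have "(\<integral>x. eta0 x * F x * g x \<partial>lborel)^2
      \<le> (\<integral>x. eta0 x * (F x)^2 \<partial>lborel) * ip0 g g" .
  from real_sqrt_le_mono[OF this]
  show "\<bar>\<integral>x. eta0 x * F x * g x \<partial>lborel\<bar>
      \<le> sqrt (\<integral>x. eta0 x * (F x)^2 \<partial>lborel) * sqrt (ip0 g g)"
    by (simp add: real_sqrt_mult)
qed (simp add: eta0_nonneg)

lemma T0_characterization:
  assumes "F \<in> borel_measurable lborel" "integrable lborel (\<lambda>x. eta0 x * (F x)^2)"
  shows "T0 F \<in> Hreal" "g \<in> Hreal \<Longrightarrow> ip0 (T0 F) g = (\<integral>x. eta0 x * F x * g x \<partial>lborel)"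
proof -
  interpret bounded_linear_functional_on Hreal ip0 "\<lambda>g. \<integral>x. eta0 x * F x * g x \<partial>lborel"
    "sqrt (\<integral>x. eta0 x * (F x)^2 \<partial>lborel)"
    by (rule eta0_pairing_bounded_linear[OF assms])
  obtain u where u: "u \<in> Hreal" "\<forall>g\<in>Hreal. ip0 u g = (\<integral>x. eta0 x * F x * g x \<partial>lborel)"
    using representation by blast
  have "\<exists>!u. u \<in> Hreal \<and> (\<forall>g\<in>Hreal. ip0 u g = (\<integral>x. eta0 x * F x * g x \<partial>lborel))"
  proof (rule ex1I[of _ u])
    fix v assume "v \<in> Hreal \<and> (\<forall>g\<in>Hreal. ip0 v g = (\<integral>x. eta0 x * F x * g x \<partial>lborel))"
    with u show "v = u" by (intro Hreal.representer_unique[OF Hreal_zero_if_ip0_self_zero]) auto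
  qed (use u in blast)
  then have "T0 F \<in> Hreal \<and> (\<forall>g\<in>Hreal. ip0 (T0 F) g = (\<integral>x. eta0 x * F x * g x \<partial>lborel))"
    unfolding T0_def by (rule theI')
  then show "T0 F \<in> Hreal" "g \<in> Hreal \<Longrightarrow> ip0 (T0 F) g = (\<integral>x. eta0 x * F x * g x \<partial>lborel)"
    by auto
qed

lemma T0_diff_le:
  assumes [measurable]: "F \<in> borel_measurable lborel" "G \<in> borel_measurable lborel"
    and F: "integrable lborel (\<lambda>x. eta0 x * (F x)^2)" and G: "integrable lborel (\<lambda>x. eta0 x * (G x)^2)"
  shows "norm0 (\<lambda>x. T0 F x - T0 G x) \<le> sqrt (\<integral>x. eta0 x * (F x - G x)^2 \<partial>lborel)"
proof -
  note TF = T0_characterization[OF assms(1) F] and TG = T0_characterization[OF assms(2) G]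
  have FG: "integrable lborel (\<lambda>x. eta0 x * (F x - G x)^2)"
    using weighted_square_integrable_lincomb[of F lborel G eta0 1 "-1"] F G by (simp add: eta0_nonneg)
  interpret bounded_linear_functional_on Hreal ip0 "\<lambda>g. \<integral>x. eta0 x * (F x - G x) * g x \<partial>lborel"
    "sqrt (\<integral>x. eta0 x * (F x - G x)^2 \<partial>lborel)"
    by (rule eta0_pairing_bounded_linear[OF _ FG]) simp
  have "ip0 (\<lambda>x. T0 F x - T0 G x) g = (\<integral>x. eta0 x * (F x - G x) * g x \<partial>lborel)"
    if g: "g \<in> Hreal" for g
  proof -
    have "integrable lborel (\<lambda>x. eta0 x * F x * g x)" "integrable lborel (\<lambda>x. eta0 x * G x * g x)"
      using HrealD[OF g] F G by (auto intro!: integrable_weighted_mult simp: eta0_nonneg)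
    then have "(\<integral>x. eta0 x * (F x - G x) * g x \<partial>lborel)
        = (\<integral>x. eta0 x * F x * g x \<partial>lborel) - (\<integral>x. eta0 x * G x * g x \<partial>lborel)"
      by (simp add: algebra_simps flip: Bochner_Integration.integral_diff)
    then show ?thesis using Hreal.ip_diff_left[OF TF(1) TG(1) g] TF(2)[OF g] TG(2)[OF g] by simp
  qed
  then show ?thesis
    unfolding norm0_def by (rule representer_norm_le[OF Hreal_diff[OF TF(1) TG(1)]])
qed

section \<open>Compactness of the embedding of Hreal into the eta0-weighted L2 space\<close>

lemma diagonal_subseq_convergent_on_countable:
  fixes fs :: "nat \<Rightarrow> 'a \<Rightarrow> 'b::heine_borel"
  assumes "countable D" and bounded: "\<And>x. x \<in> D \<Longrightarrow> bounded (range (\<lambda>n. fs n x))"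
  obtains r where "strict_mono r" "\<And>x. x \<in> D \<Longrightarrow> convergent (\<lambda>n. fs (r n) x)"
proof (cases "D = {}")
  case True
  then show ?thesis using that[OF strict_mono_id] by simp
next
  case False
  define q where "q = from_nat_into D"
  have D: "D = range q" unfolding q_def using range_from_nat_into[OF False \<open>countable D\<close>] by simp
  define P where "P k \<sigma> \<longleftrightarrow> convergent (\<lambda>n. fs (\<sigma> n) (q k))" for k and \<sigma> :: "nat \<Rightarrow> nat"
  have P_iff: "P k \<sigma> \<longleftrightarrow> convergent (\<lambda>n. fs (\<sigma> n) (q k))" for k \<sigma> by (simp add: P_def)
  interpret subseqs P
  proof
    fix k and s :: "nat \<Rightarrow> nat"
    have "bounded (range (\<lambda>n. fs (s n) (q k)))"
      using bounded[of "q k"] D by (auto intro: bounded_subset)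
    then obtain l r' where "strict_mono r'" "((\<lambda>n. fs (s n) (q k)) \<circ> r') \<longlonglongrightarrow> l"
      using bounded_imp_convergent_subsequence by blast
    then show "\<exists>r'. strict_mono r' \<and> P k (s \<circ> r')"
      by (auto simp: P_iff o_def convergent_def)
  qed
  have "P k (diagseq \<circ> (+) (Suc k))" for k
  proof (rule diagseq_holds)
    fix r s :: "nat \<Rightarrow> nat" and n assume "strict_mono r" "P n s"
    then show "P n (s \<circ> r)"
      using convergent_subseq_convergent[of "\<lambda>m. fs (s m) (q n)" r] by (simp add: P_iff o_def)
  qed
  then have "convergent (\<lambda>n. fs (diagseq (n + Suc k)) (q k))" for k
    by (simp only: P_iff comp_def add.commute)
  then have "convergent (\<lambda>n. fs (diagseq n) (q k))" for k
    using convergent_ignore_initial_segment[of "\<lambda>n. fs (diagseq n) (q k)" "Suc k"] by simp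
  with D subseq_diagseq show ?thesis by (intro that) auto
qed

lemma convergent_if_equicontinuous_and_convergent_on_Rats:
  fixes fs :: "nat \<Rightarrow> real \<Rightarrow> real"
  assumes equicont: "\<And>e. e > 0 \<Longrightarrow> \<exists>d>0. \<forall>n y. \<bar>y - x\<bar> < d \<longrightarrow> \<bar>fs n y - fs n x\<bar> < e"
    and conv: "\<And>q. q \<in> \<rat> \<Longrightarrow> convergent (\<lambda>n. fs n q)"
  shows "convergent (\<lambda>n. fs n x)"
proof -
  have "Cauchy (\<lambda>n. fs n x)"
  proof (rule metric_CauchyI)
    fix e :: real assume "0 < e"
    then obtain d where "d > 0" and d: "\<And>n y. \<bar>y - x\<bar> < d \<Longrightarrow> \<bar>fs n y - fs n x\<bar> < e / 3"
      using equicont[of "e / 3"] by auto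
    obtain q where "q \<in> \<rat>" "x < q" "q < x + d" using Rats_dense_in_real[of x "x + d"] \<open>d > 0\<close> by auto
    then have close: "\<bar>fs n q - fs n x\<bar> < e / 3" for n using d by simp
    have "Cauchy (\<lambda>n. fs n q)" using conv[OF \<open>q \<in> \<rat>\<close>] by (simp add: Cauchy_convergent_iff)
    then obtain N where N: "\<forall>m\<ge>N. \<forall>n\<ge>N. dist (fs m q) (fs n q) < e / 3"
      using \<open>0 < e\<close> unfolding Cauchy_def by (meson divide_pos_pos zero_less_numeral)
    have "dist (fs m x) (fs n x) < e" if "m \<ge> N" "n \<ge> N" for m n
    proof -
      have "\<bar>fs m q - fs n q\<bar> < e / 3" using N that by (simp add: dist_real_def)
      then show ?thesis using close[of m] close[of n] unfolding dist_real_def by linarith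
    qed
    then show "\<exists>N. \<forall>m\<ge>N. \<forall>n\<ge>N. dist (fs m x) (fs n x) < e" by blast
  qed
  then show ?thesis by (simp add: Cauchy_convergent_iff)
qed

lemma Hreal_square_le_bound:
  obtains K where "\<And>f x. f \<in> Hreal \<Longrightarrow> ip0 f f \<le> B \<Longrightarrow> (f x)^2 \<le> K * (1 + \<bar>x\<bar>) * B"
proof -
  obtain K where K: "0 < K" "\<And>f x. f \<in> Hreal \<Longrightarrow> (f x)^2 \<le> K * (1 + \<bar>x\<bar>) * ip0 f f"
    using Hreal_square_le by blast
  have "(f x)^2 \<le> K * (1 + \<bar>x\<bar>) * B" if f: "f \<in> Hreal" and "ip0 f f \<le> B" for f x
  proof -
    have "(f x)^2 \<le> K * (1 + \<bar>x\<bar>) * ip0 f f" by (rule K(2)[OF f])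
    also have "\<dots> \<le> K * (1 + \<bar>x\<bar>) * B" using K(1) \<open>ip0 f f \<le> B\<close> by (intro mult_left_mono) auto
    finally show ?thesis .
  qed
  with that show ?thesis by blast
qed

lemma Hreal_bounded_equicontinuous:
  assumes "e > 0"
  obtains d where "d > 0" "\<And>f x y. f \<in> Hreal \<Longrightarrow> ip0 f f \<le> B \<Longrightarrow> \<bar>y - x\<bar> < d \<Longrightarrow> \<bar>f y - f x\<bar> < e"
proof (rule that[of "e^2 / (\<bar>B\<bar> + 1)"])
  show "0 < e^2 / (\<bar>B\<bar> + 1)" using \<open>e > 0\<close> by simp
  fix f x y assume f: "f \<in> Hreal" and "ip0 f f \<le> B" and xy: "\<bar>y - x\<bar> < e^2 / (\<bar>B\<bar> + 1)"
  have "(f y - f x)^2 \<le> \<bar>y - x\<bar> * ip0 f f" by (rule Hreal_Holder[OF f])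
  also have "\<dots> \<le> \<bar>y - x\<bar> * \<bar>B\<bar>" using \<open>ip0 f f \<le> B\<close> by (intro mult_left_mono) auto
  also have "\<dots> \<le> e^2 / (\<bar>B\<bar> + 1) * \<bar>B\<bar>" using xy by (intro mult_right_mono) auto
  also have "\<dots> < e^2" using \<open>e > 0\<close> by (simp add: field_simps)
  finally show "\<bar>f y - f x\<bar> < e"
    using power2_less_imp_less[of "\<bar>f y - f x\<bar>" e] \<open>e > 0\<close> by simp
qed

lemma Hreal_bounded_imp_pointwise_convergent_subseq:
  fixes fs :: "nat \<Rightarrow> real \<Rightarrow> real"
  assumes fs: "\<And>n. fs n \<in> Hreal" and bound: "\<And>n. ip0 (fs n) (fs n) \<le> B"
  obtains r where "strict_mono r" "\<And>x. convergent (\<lambda>n. fs (r n) x)"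
proof -
  obtain K where K: "\<And>f x. f \<in> Hreal \<Longrightarrow> ip0 f f \<le> B \<Longrightarrow> (f x)^2 \<le> K * (1 + \<bar>x\<bar>) * B"
    using Hreal_square_le_bound by blast
  have "\<bar>fs n x\<bar> \<le> sqrt (K * (1 + \<bar>x\<bar>) * B)" for n x
    using real_sqrt_le_mono[OF K[OF fs bound, of n x]] by simp
  then have "bounded (range (\<lambda>n. fs n x))" for x
    unfolding bounded_iff by (intro exI[of _ "sqrt (K * (1 + \<bar>x\<bar>) * B)"]) auto
  then obtain r where r: "strict_mono r" and conv: "\<And>q. q \<in> \<rat> \<Longrightarrow> convergent (\<lambda>n. fs (r n) q)"
    using diagonal_subseq_convergent_on_countable[where D=\<rat> and fs=fs] countable_rat by blast
  have equicont: "\<exists>d>0. \<forall>n y. \<bar>y - x\<bar> < d \<longrightarrow> \<bar>fs (r n) y - fs (r n) x\<bar> < e"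
    if e: "e > 0" for x e
  proof -
    obtain d where "d > 0"
      and d: "\<And>f x y. f \<in> Hreal \<Longrightarrow> ip0 f f \<le> B \<Longrightarrow> \<bar>y - x\<bar> < d \<Longrightarrow> \<bar>f y - f x\<bar> < e"
      using Hreal_bounded_equicontinuous[OF e] by blast
    then show ?thesis using d[OF fs bound] by blast
  qed
  have "convergent (\<lambda>n. fs (r n) x)" for x
    using equicont conv by (rule convergent_if_equicontinuous_and_convergent_on_Rats)
  with r that show ?thesis by blast
qed

lemma eta0_L2_tendsto_if_linear_growth:
  fixes g :: "nat \<Rightarrow> real \<Rightarrow> real"
  assumes [measurable]: "\<And>n. g n \<in> borel_measurable lborel" "G \<in> borel_measurable lborel"
    and lim: "\<And>x. (\<lambda>n. g n x) \<longlonglongrightarrow> G x" and growth: "\<And>n x. (g n x)^2 \<le> C * (1 + \<bar>x\<bar>)"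
  shows "integrable lborel (\<lambda>x. eta0 x * (G x)^2)"
    "(\<lambda>n. \<integral>x. eta0 x * (g n x - G x)^2 \<partial>lborel) \<longlonglongrightarrow> 0"
proof -
  have G_le: "(G x)^2 \<le> C * (1 + \<bar>x\<bar>)" for x
    using growth by (intro LIMSEQ_le_const2[OF tendsto_power[OF lim]]) auto
  define W where "W x = eta0 x * (4 * (C * (1 + \<bar>x\<bar>)))" for x
  have W: "integrable lborel W"
    unfolding W_def using integrable_mult_right[OF integrable_eta0_times_linear, of "4 * C"]
    by (simp add: algebra_simps)
  have "(G x)^2 \<le> 4 * (C * (1 + \<bar>x\<bar>))" "(g n x - G x)^2 \<le> 4 * (C * (1 + \<bar>x\<bar>))" for n x
  proof -
    have "0 \<le> C * (1 + \<bar>x\<bar>)" using growth[of 0 x] by (meson order_trans zero_le_power2)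
    moreover have "(g n x - G x)^2 \<le> 2 * (g n x)^2 + 2 * (G x)^2"
      using sum_squares_bound[of "- g n x" "G x"] by (simp add: power2_diff)
    ultimately show "(G x)^2 \<le> 4 * (C * (1 + \<bar>x\<bar>))" "(g n x - G x)^2 \<le> 4 * (C * (1 + \<bar>x\<bar>))"
      using growth[of n x] G_le[of x] by linarith+
  qed
  then have le_W: "eta0 x * (G x)^2 \<le> W x" "eta0 x * (g n x - G x)^2 \<le> W x" for n x
    unfolding W_def by (intro mult_left_mono eta0_nonneg; simp)+
  show "integrable lborel (\<lambda>x. eta0 x * (G x)^2)"
    using le_W(1) eta0_nonneg
    by (intro Bochner_Integration.integrable_bound[OF W] AE_I2) (auto intro: order_trans[OF _ abs_ge_self])
  have "(\<lambda>n. \<integral>x. eta0 x * (g n x - G x)^2 \<partial>lborel) \<longlonglongrightarrow> integral\<^sup>L lborel (\<lambda>x::real. 0::real)"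
  proof (rule integral_dominated_convergence[where w=W and M=lborel and f="\<lambda>x. 0"
        and s="\<lambda>n x. eta0 x * (g n x - G x)^2"])
    show "AE x in lborel. (\<lambda>n. eta0 x * (g n x - G x)^2) \<longlonglongrightarrow> 0"
    proof (intro AE_I2)
      fix x
      have "(\<lambda>n. eta0 x * (g n x - G x)^2) \<longlonglongrightarrow> eta0 x * (G x - G x)^2"
        by (intro tendsto_intros lim)
      then show "(\<lambda>n. eta0 x * (g n x - G x)^2) \<longlonglongrightarrow> 0" by simp
    qed
    show "AE x in lborel. norm (eta0 x * (g n x - G x)^2) \<le> W x" for n
      using le_W(2) eta0_nonneg by (intro AE_I2) simp
  qed (simp_all add: W)
  then show "(\<lambda>n. \<integral>x. eta0 x * (g n x - G x)^2 \<partial>lborel) \<longlonglongrightarrow> 0" by simp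
qed

lemma Hreal_bounded_imp_eta0_L2_convergent_subseq:
  fixes fs :: "nat \<Rightarrow> real \<Rightarrow> real"
  assumes fs: "\<And>n. fs n \<in> Hreal" and bound: "\<And>n. ip0 (fs n) (fs n) \<le> B"
  obtains r F where "strict_mono r" "F \<in> borel_measurable lborel"
    "integrable lborel (\<lambda>x. eta0 x * (F x)^2)"
    "(\<lambda>n. \<integral>x. eta0 x * (fs (r n) x - F x)^2 \<partial>lborel) \<longlonglongrightarrow> 0"
proof -
  obtain K where K: "\<And>f x. f \<in> Hreal \<Longrightarrow> ip0 f f \<le> B \<Longrightarrow> (f x)^2 \<le> K * (1 + \<bar>x\<bar>) * B"
    using Hreal_square_le_bound by blast
  obtain r where r: "strict_mono r" and conv: "\<And>x. convergent (\<lambda>n. fs (r n) x)"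
    using Hreal_bounded_imp_pointwise_convergent_subseq[where fs=fs and B=B, OF fs bound] by blast
  define F where "F x = lim (\<lambda>n. fs (r n) x)" for x
  have F_meas: "F \<in> borel_measurable lborel" unfolding F_def using HrealD(3)[OF fs] by measurable
  have lim: "(\<lambda>n. fs (r n) x) \<longlonglongrightarrow> F x" for x
    unfolding F_def using conv by (simp add: convergent_LIMSEQ_iff)
  have "(fs (r n) x)^2 \<le> (K * B) * (1 + \<bar>x\<bar>)" for n x
    using K[OF fs bound, of "r n" x] by (simp add: mult_ac)
  from eta0_L2_tendsto_if_linear_growth[OF HrealD(3)[OF fs] F_meas lim this]
  show ?thesis using that[OF r F_meas] by blast
qed

lemma T0_tendsto_if_eta0_L2_tendsto:
  assumes Fs: "\<And>n. Fs n \<in> borel_measurable lborel" "\<And>n. integrable lborel (\<lambda>x. eta0 x * (Fs n x)^2)"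
    and F: "F \<in> borel_measurable lborel" "integrable lborel (\<lambda>x. eta0 x * (F x)^2)"
    and lim: "(\<lambda>n. \<integral>x. eta0 x * (Fs n x - F x)^2 \<partial>lborel) \<longlonglongrightarrow> 0"
  shows "(\<lambda>n. norm0 (\<lambda>x. T0 (Fs n) x - T0 F x)) \<longlonglongrightarrow> 0"
proof (rule Lim_null_comparison)
  have "0 \<le> norm0 (\<lambda>x. T0 (Fs n) x - T0 F x)" for n
    using ip0_self_ge(3)[OF Hreal_diff[OF T0_characterization(1)[OF Fs] T0_characterization(1)[OF F]]]
    by (simp add: norm0_def)
  then show "\<forall>\<^sub>F n in sequentially. norm (norm0 (\<lambda>x. T0 (Fs n) x - T0 F x))
      \<le> sqrt (\<integral>x. eta0 x * (Fs n x - F x)^2 \<partial>lborel)"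
    using T0_diff_le[OF Fs(1) F(1) Fs(2) F(2)] by simp
  show "(\<lambda>n. sqrt (\<integral>x. eta0 x * (Fs n x - F x)^2 \<partial>lborel)) \<longlonglongrightarrow> 0"
    using tendsto_real_sqrt[OF lim] by simp
qed

theorem lemma3p1:
  shows "(\<forall>f\<in>Hreal. T0 f \<in> Hreal) \<and>
    (\<forall>(fs :: nat \<Rightarrow> real \<Rightarrow> real) B. (\<forall>n. fs n \<in> Hreal) \<and> (\<forall>n. norm0 (fs n) \<le> B) \<longrightarrow>
       (\<exists>r g. strict_mono r \<and> g \<in> Hreal \<and>
          (\<lambda>n. norm0 (\<lambda>x. T0 (fs (r n)) x - g x)) \<longlonglongrightarrow> 0))"
proof (intro conjI ballI allI impI)
  fix f assume "f \<in> Hreal"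
  then show "T0 f \<in> Hreal" using T0_characterization(1) HrealD(2,3) by blast
next
  fix fs :: "nat \<Rightarrow> real \<Rightarrow> real" and B :: real
  assume "(\<forall>n. fs n \<in> Hreal) \<and> (\<forall>n. norm0 (fs n) \<le> B)"
  then have fs: "\<And>n. fs n \<in> Hreal" and "\<And>n. sqrt (ip0 (fs n) (fs n)) \<le> B"
    unfolding norm0_def by auto
  then have "\<And>n. ip0 (fs n) (fs n) \<le> B^2"
    using ip0_self_ge(3)[OF fs] power_mono[of "sqrt (ip0 (fs _) (fs _))" B 2] by simp
  then obtain r F where r: "strict_mono r" and F: "F \<in> borel_measurable lborel"
    "integrable lborel (\<lambda>x. eta0 x * (F x)^2)"
    and lim: "(\<lambda>n. \<integral>x. eta0 x * (fs (r n) x - F x)^2 \<partial>lborel) \<longlonglongrightarrow> 0"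
    using Hreal_bounded_imp_eta0_L2_convergent_subseq[where fs=fs, OF fs] by blast
  have "(\<lambda>n. norm0 (\<lambda>x. T0 (fs (r n)) x - T0 F x)) \<longlonglongrightarrow> 0"
    using HrealD(2,3)[OF fs] by (intro T0_tendsto_if_eta0_L2_tendsto[OF _ _ F lim])
  with r T0_characterization(1)[OF F] show "\<exists>r g. strict_mono r \<and> g \<in> Hreal \<and>
      (\<lambda>n. norm0 (\<lambda>x. T0 (fs (r n)) x - g x)) \<longlonglongrightarrow> 0" by blast
qed

end
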